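(* There exists a constant $\delta_0>0$ such that the following holds. If $\|\mathcal T-\mathcal S\|_{\mathrm{op}}\le \delta_0$, then every local minimizer $x^+$ of $f$ corresponds to a vector of the form $x=x^\natural e^{i\theta}$ for some $\theta\in[0,2\pi)$ (and these points are global minimizers of $f$), and every saddle point of $f$ is strict, i.e. at every critical point of $f$ that is not a local minimizer the Hessian of $f$ has a strictly negative eigenvalue.
   Context: Let $n,m\ge 1$, $a_1,\dots,a_m\in\mathbb C^n$ and $x^\natural\in\mathbb C^n$. For $a,b\in\mathbb C^n$ write $\langle a,b\rangle=\sum_{j}a_j\overline{b_j}$ and let $\|\cdot\|$ be the Euclidean norm. Let $y_i=|\langle a_i,x^\natural\rangle|^2$. For $v\in\mathbb C^n$ put $v^+=(\mathrm{Re}\,v,\mathrm{Im}\,v)\in\mathbb R^{2n}$ and $v^-=Mv^+=(-\mathrm{Im}\,v,\mathrm{Re}\,v)$, where $M=\begin{bmatrix}0&-I_n\\ I_n&0\end{bmatrix}$. The map $x\mapsto x^+$ identifies $\mathbb C^n$ with $\mathbb R^{2n}$, and $x$ and $x^+$ always correspond to each other. Define $f:\mathbb R^{2n}\to\mathbb R$ by $f(x^+)=\sum_{i=1}^m\big(|\langle a_i,x\rangle|^2-y_i\big)^2=\sum_{i=1}^m\big(\langle A_ix^+,x^+\rangle-y_i\big)^2$ with $A_i=a_i^+(a_i^+)^{T}+a_i^-(a_i^-)^{T}$; gradients and Hessians are taken with respect to $x^+\in\mathbb R^{2n}$. Fix $\sigma>0$ (in the paper, $\sigma^2=\mathrm{Var}((a_i^+)_1)$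 for random measurement vectors) and set $c=m\sigma^4$. Define the order-4 tensors on $\mathbb R^{2n}$: $\mathcal T=\frac1c\sum_{i=1}^m(a_i^+)^{\otimes 4}$ and $\mathcal S_{i_1i_2i_3i_4}=\mathbf 1_{i_1=i_2,\,i_3=i_4}+\mathbf 1_{i_1=i_3,\,i_2=i_4}+\mathbf 1_{i_1=i_4,\,i_2=i_3}$ for $1\le i_1,i_2,i_3,i_4\le 2n$. The inner product of tensors is the sum of entrywise products, and $\|\mathcal R\|_{\mathrm{op}}=\sup\{\langle \mathcal R,u_1\otimes u_2\otimes u_3\otimes u_4\rangle:\ u_j\in\mathbb R^{2n},\ \|u_1\|\|u_2\|\|u_3\|\|u_4\|=1\}$. *)

theory Defs
  imports "HOL-Analysis.Analysis"
begin

text \<open>Vectors in C^n are modelled as functions nat => complex (only indices j < n matter);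
vectors in R^N (N = 2n) as functions nat => real vanishing at indices >= N.
This explicit-carrier encoding lets the constant delta_0 be independent of n and m.\<close>

definition rvecs :: "nat \<Rightarrow> (nat \<Rightarrow> real) set" where
  "rvecs N = {u. \<forall>j\<ge>N. u j = 0}"

definition rnorm :: "nat \<Rightarrow> (nat \<Rightarrow> real) \<Rightarrow> real" where
  "rnorm N u = sqrt (\<Sum>j<N. (u j)\<^sup>2)"

definition cinner :: "nat \<Rightarrow> (nat \<Rightarrow> complex) \<Rightarrow> (nat \<Rightarrow> complex) \<Rightarrow> complex" where
  "cinner n a b = (\<Sum>j<n. a j * cnj (b j))"

definition plus_vec :: "nat \<Rightarrow> (nat \<Rightarrow> complex) \<Rightarrow> nat \<Rightarrow> real" where
  "plus_vec n v = (\<lambda>j. if j < n then Re (v j) else if j < 2*n then Im (v (j - n)) else 0)"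

definition of_plus :: "nat \<Rightarrow> (nat \<Rightarrow> real) \<Rightarrow> nat \<Rightarrow> complex" where
  "of_plus n u = (\<lambda>j. if j < n then Complex (u j) (u (j + n)) else 0)"

definition pr_obj :: "nat \<Rightarrow> nat \<Rightarrow> (nat \<Rightarrow> nat \<Rightarrow> complex) \<Rightarrow> (nat \<Rightarrow> complex) \<Rightarrow> (nat \<Rightarrow> real) \<Rightarrow> real" where
  "pr_obj n m a xn u =
     (\<Sum>i<m. ((cmod (cinner n (a i) (of_plus n u)))\<^sup>2 - (cmod (cinner n (a i) xn))\<^sup>2)\<^sup>2)"

definition is_local_min :: "nat \<Rightarrow> ((nat \<Rightarrow> real) \<Rightarrow> real) \<Rightarrow> (nat \<Rightarrow> real) \<Rightarrow> bool" where
  "is_local_min N F u \<longleftrightarrow> u \<in> rvecs N \<and>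
     (\<exists>\<epsilon>>0. \<forall>v\<in>rvecs N. rnorm N (\<lambda>j. v j - u j) < \<epsilon> \<longrightarrow> F u \<le> F v)"

definition is_global_min :: "nat \<Rightarrow> ((nat \<Rightarrow> real) \<Rightarrow> real) \<Rightarrow> (nat \<Rightarrow> real) \<Rightarrow> bool" where
  "is_global_min N F u \<longleftrightarrow> u \<in> rvecs N \<and> (\<forall>v\<in>rvecs N. F u \<le> F v)"

definition pderiv_r :: "((nat \<Rightarrow> real) \<Rightarrow> real) \<Rightarrow> nat \<Rightarrow> (nat \<Rightarrow> real) \<Rightarrow> real" where
  "pderiv_r F j u = deriv (\<lambda>t. F (\<lambda>l. u l + (if l = j then t else 0))) 0"

definition hess_r :: "((nat \<Rightarrow> real) \<Rightarrow> real) \<Rightarrow> (nat \<Rightarrow> real) \<Rightarrow> nat \<Rightarrow> nat \<Rightarrow> real" where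
  "hess_r F u j k = deriv (\<lambda>t. pderiv_r F j (\<lambda>l. u l + (if l = k then t else 0))) 0"

definition is_critical :: "nat \<Rightarrow> ((nat \<Rightarrow> real) \<Rightarrow> real) \<Rightarrow> (nat \<Rightarrow> real) \<Rightarrow> bool" where
  "is_critical N F u \<longleftrightarrow> u \<in> rvecs N \<and> (\<forall>j<N. pderiv_r F j u = 0)"

definition hess_has_neg_eigenvalue :: "nat \<Rightarrow> ((nat \<Rightarrow> real) \<Rightarrow> real) \<Rightarrow> (nat \<Rightarrow> real) \<Rightarrow> bool" where
  "hess_has_neg_eigenvalue N F u \<longleftrightarrow>
     (\<exists>\<mu><0. \<exists>v\<in>rvecs N. v \<noteq> (\<lambda>_. 0) \<and>
        (\<forall>j<N. (\<Sum>k<N. hess_r F u j k * v k) = \<mu> * v j))"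

type_synonym tensor4 = "nat \<Rightarrow> nat \<Rightarrow> nat \<Rightarrow> nat \<Rightarrow> real"

definition T_tensor :: "nat \<Rightarrow> nat \<Rightarrow> real \<Rightarrow> (nat \<Rightarrow> nat \<Rightarrow> complex) \<Rightarrow> tensor4" where
  "T_tensor n m \<sigma> a = (\<lambda>i1 i2 i3 i4. (1 / (real m * \<sigma> ^ 4)) *
     (\<Sum>i<m. plus_vec n (a i) i1 * plus_vec n (a i) i2 * plus_vec n (a i) i3 * plus_vec n (a i) i4))"

definition S_tensor :: tensor4 where
  "S_tensor = (\<lambda>i1 i2 i3 i4.
     (if i1 = i2 \<and> i3 = i4 then 1 else 0) + (if i1 = i3 \<and> i2 = i4 then 1 else 0)
     + (if i1 = i4 \<and> i2 = i3 then 1 else 0))"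

definition tensor_pair :: "nat \<Rightarrow> tensor4 \<Rightarrow> (nat \<Rightarrow> real) \<Rightarrow> (nat \<Rightarrow> real) \<Rightarrow> (nat \<Rightarrow> real) \<Rightarrow> (nat \<Rightarrow> real) \<Rightarrow> real" where
  "tensor_pair N R u1 u2 u3 u4 =
     (\<Sum>i1<N. \<Sum>i2<N. \<Sum>i3<N. \<Sum>i4<N. R i1 i2 i3 i4 * u1 i1 * u2 i2 * u3 i3 * u4 i4)"

definition tensor_opnorm :: "nat \<Rightarrow> tensor4 \<Rightarrow> real" where
  "tensor_opnorm N R = Sup {tensor_pair N R u1 u2 u3 u4 | u1 u2 u3 u4.
      u1 \<in> rvecs N \<and> u2 \<in> rvecs N \<and> u3 \<in> rvecs N \<and> u4 \<in> rvecs N \<and>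
      rnorm N u1 * rnorm N u2 * rnorm N u3 * rnorm N u4 = 1}"

end

theory Submission
  imports Defs
begin

text \<open>
  Write \<open>Q\<^sub>i v = \<bar>\<langle>a\<^sub>i, v\<rangle>\<bar>\<^sup>2\<close>, so that \<open>f u = \<Sum>\<^sub>i (Q\<^sub>i u - Q\<^sub>i x)\<^sup>2\<close>, and let \<open>u\<close> be a critical
  point. Since \<open>f\<close> depends on \<open>x\<close> only through the values \<open>Q\<^sub>i x\<close>, the signal may be rotated by
  a phase so that \<open>r = (x e\<^sup>i\<^sup>\<theta>)\<^sup>+\<close> satisfies \<open>\<langle>u, M r\<rangle> = 0\<close> and \<open>\<langle>u, r\<rangle> \<ge> 0\<close>.
  The first-order condition in the directions \<open>u\<close>, \<open>r\<close>, \<open>u - r\<close> and the second-order condition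
  in direction \<open>r\<close> are relations between empirical fourth moments of the measurements. Each such
  moment is a pairing of \<open>T\<close> with \<open>u\<close>, \<open>r\<close>, \<open>M u\<close>, \<open>M r\<close>, so \<open>\<parallel>T - S\<parallel>\<^sub>o\<^sub>p \<le> \<delta>\<close> replaces
  it by its Gaussian value, a pairing of \<open>S\<close>, up to \<open>\<delta>\<close> times the norms. By homogeneity one may
  take \<open>\<parallel>r\<parallel> = 1\<close>; the four resulting scalar inequalities in \<open>\<parallel>u\<parallel>\<close>, \<open>\<langle>u, r\<rangle>\<close> and
  \<open>\<parallel>u - r\<parallel>\<close> force \<open>u = r\<close> for \<open>\<delta> = 1/1000\<close>. So a local minimiser is a phase rotation of \<open>x\<close>,
  where \<open>f\<close> vanishes; at every other critical point the Hessian form is negative in direction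
  \<open>r\<close>, and minimising the Rayleigh quotient of the Hessian yields a negative eigenvalue.
\<close>

type_synonym rvec = "nat \<Rightarrow> real"
type_synonym cvec = "nat \<Rightarrow> complex"

section \<open>Real coordinates of complex vectors\<close>

definition rdot :: "nat \<Rightarrow> rvec \<Rightarrow> rvec \<Rightarrow> real" where
  "rdot N u v = (\<Sum>j<N. u j * v j)"

text \<open>The matrix \<open>M\<close> of the paper, \<open>v\<^sup>+ \<mapsto> v\<^sup>-\<close>; it is multiplication by \<open>\<i>\<close> in real coordinates.\<close>
definition imul :: "nat \<Rightarrow> rvec \<Rightarrow> rvec" where
  "imul n u = (\<lambda>j. if j < n then - u (j + n) else if j < 2*n then u (j - n) else 0)"

lemma sum_lessThan_double: "(\<Sum>j<2*(n::nat). f j) = (\<Sum>j<n. f j) + (\<Sum>j<n. f (j + n))"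
proof -
  have "(\<Sum>j<2*n. f j) = (\<Sum>j<n. f j) + (\<Sum>j\<in>{n..<n+n}. f j)"
    using sum.atLeastLessThan_concat[of 0 n "n+n" f] by (simp add: atLeast0LessThan mult_2)
  also have "(\<Sum>j\<in>{n..<n+n}. f j) = (\<Sum>j<n. f (j + n))"
    using sum.shift_bounds_nat_ivl[of f 0 n n] by (simp add: atLeast0LessThan)
  finally show ?thesis .
qed

lemma imul_low [simp]: "j < n \<Longrightarrow> imul n u j = - u (j + n)"
  and imul_high [simp]: "imul n u (j + n) = (if j < n then u j else 0)"
  by (simp_all add: imul_def)

lemma imul_in_rvecs: "imul n u \<in> rvecs (2*n)"
  by (simp add: imul_def rvecs_def)

lemma imul_diff: "imul n (\<lambda>j. u j - v j) = (\<lambda>j. imul n u j - imul n v j)"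
  and imul_lincomb: "imul n (\<lambda>j. x * u j + y * v j) = (\<lambda>j. x * imul n u j + y * imul n v j)"
  by (auto simp: imul_def fun_eq_iff)

lemma rdot_commute: "rdot N u v = rdot N v u"
  by (simp add: rdot_def mult.commute)

lemma rdot_diff_right: "rdot N w (\<lambda>j. u j - v j) = rdot N w u - rdot N w v"
  and rdot_lincomb_right: "rdot N w (\<lambda>j. x * u j + y * v j) = x * rdot N w u + y * rdot N w v"
  by (simp_all add: rdot_def sum_subtractf sum.distrib sum_distrib_left algebra_simps)

lemma rdot_diff_self:
  "rdot N (\<lambda>j. u j - v j) (\<lambda>j. u j - v j) = rdot N u u - 2 * rdot N u v + rdot N v v"
  by (simp add: rdot_def sum_subtractf sum.distrib sum_distrib_left algebra_simps)

lemma rdot_scale: "rdot N (\<lambda>j. c * u j) (\<lambda>j. c * v j) = c\<^sup>2 * rdot N u v"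
  by (simp add: rdot_def sum_distrib_left power2_eq_square ac_simps)

lemma imul_scale: "imul n (\<lambda>j. c * u j) = (\<lambda>j. c * imul n u j)"
  by (auto simp: imul_def fun_eq_iff)

lemma rdot_imul_imul [simp]: "rdot (2*n) (imul n u) (imul n v) = rdot (2*n) u v"
  unfolding rdot_def sum_lessThan_double by (simp add: add.commute)

lemma rdot_imul_right: "rdot (2*n) u (imul n v) = - rdot (2*n) (imul n u) v"
  unfolding rdot_def sum_lessThan_double
  by (simp add: sum_negf[symmetric] sum.distrib[symmetric] algebra_simps)

lemma rdot_imul_left: "rdot (2*n) (imul n u) v = - rdot (2*n) u (imul n v)"
  using rdot_imul_right[of n u v] by simp

lemma rdot_imul_antisym: "rdot (2*n) v (imul n u) = - rdot (2*n) u (imul n v)"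
  using rdot_imul_left[of n v u] by (simp add: rdot_commute)

lemma rdot_imul_self [simp]: "rdot (2*n) u (imul n u) = 0" "rdot (2*n) (imul n u) u = 0"
  using rdot_imul_right[of n u u] by (simp_all add: rdot_commute)

lemma rdot_self_nonneg: "rdot N u u \<ge> 0"
  by (simp add: rdot_def sum_nonneg)

lemma rdot_Cauchy_Schwarz: "(rdot N u v)\<^sup>2 \<le> rdot N u u * rdot N v v"
  using Cauchy_Schwarz_ineq_sum[of u v "{..<N}"] by (simp add: rdot_def power2_eq_square)

lemma rnorm_eq_sqrt_rdot: "rnorm N u = sqrt (rdot N u u)"
  by (simp add: rnorm_def rdot_def power2_eq_square)

lemma rdot_self_eq_rnorm_sq: "rdot N u u = (rnorm N u)\<^sup>2"
  by (simp add: rnorm_eq_sqrt_rdot rdot_self_nonneg)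

lemma rnorm_nonneg: "rnorm N u \<ge> 0"
  by (simp add: rnorm_eq_sqrt_rdot rdot_self_nonneg)

lemma rnorm_imul [simp]: "rnorm (2*n) (imul n u) = rnorm (2*n) u"
  by (simp add: rnorm_eq_sqrt_rdot)

lemma rnorm_scale: "rnorm N (\<lambda>j. c * u j) = \<bar>c\<bar> * rnorm N u"
  by (simp add: rnorm_def power_mult_distrib sum_distrib_left[symmetric] real_sqrt_mult)

lemma abs_le_rnorm: "j < N \<Longrightarrow> \<bar>u j\<bar> \<le> rnorm N u"
  unfolding rnorm_def
  by (metis real_sqrt_abs real_sqrt_le_mono finite_lessThan lessThan_iff member_le_sum zero_le_power2)

lemma rvecs_eq_if_rdot_diff_eq_0:
  assumes "u \<in> rvecs N" "v \<in> rvecs N" "rdot N (\<lambda>j. u j - v j) (\<lambda>j. u j - v j) = 0"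
  shows "u = v"
proof
  fix j
  show "u j = v j"
  proof (cases "j < N")
    case True
    then show ?thesis
      using abs_le_rnorm[OF True, of "\<lambda>j. u j - v j"] assms(3) by (simp add: rnorm_eq_sqrt_rdot)
  qed (use assms(1,2) in \<open>simp add: rvecs_def\<close>)
qed

definition basis_r :: "nat \<Rightarrow> rvec" where
  "basis_r j = (\<lambda>l. if l = j then 1 else 0)"

lemma rdot_basis_r: "j < N \<Longrightarrow> rdot N g (basis_r j) = g j"
  by (simp add: rdot_def basis_r_def if_distrib cong: if_cong)

lemma rdot_line:
  "rdot N (\<lambda>l. x l + t * w l) (\<lambda>l. x l + t * w l) = rdot N x x + 2 * t * rdot N x w + t\<^sup>2 * rdot N w w"
  by (simp add: rdot_def sum.distrib sum_distrib_left power2_eq_square algebra_simps)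

section \<open>Intensities of the measurements\<close>

definition re_inner :: "nat \<Rightarrow> cvec \<Rightarrow> rvec \<Rightarrow> real" where
  "re_inner n b v = rdot (2*n) (plus_vec n b) v"

definition intens :: "nat \<Rightarrow> cvec \<Rightarrow> rvec \<Rightarrow> real" where
  "intens n b v = (re_inner n b v)\<^sup>2 + (re_inner n b (imul n v))\<^sup>2"

text \<open>In complex terms \<open>Re (\<langle>b,x\<rangle> cnj \<langle>b,y\<rangle>)\<close> for \<open>v = x\<^sup>+\<close>, \<open>w = y\<^sup>+\<close>.\<close>
definition intens_form :: "nat \<Rightarrow> cvec \<Rightarrow> rvec \<Rightarrow> rvec \<Rightarrow> real" where
  "intens_form n b v w =
     re_inner n b v * re_inner n b w + re_inner n b (imul n v) * re_inner n b (imul n w)"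

lemma cinner_of_plus:
  "cinner n b (of_plus n u) = Complex (re_inner n b u) (re_inner n b (imul n u))"
proof -
  have "cinner n b (of_plus n u) =
      (\<Sum>j<n. Complex (Re (b j) * u j + Im (b j) * u (j + n)) (Im (b j) * u j - Re (b j) * u (j + n)))"
    unfolding cinner_def of_plus_def by (intro sum.cong) (auto simp: complex_eq_iff)
  then show ?thesis
    unfolding re_inner_def rdot_def sum_lessThan_double
    by (simp add: complex_eq_iff plus_vec_def sum.distrib sum_subtractf sum_negf algebra_simps)
qed

lemma intens_eq_cmod_cinner: "intens n b u = (cmod (cinner n b (of_plus n u)))\<^sup>2"
  by (simp add: cinner_of_plus cmod_def intens_def)

lemma intens_plus_vec: "intens n b (plus_vec n x) = (cmod (cinner n b x))\<^sup>2"
proof -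
  have "cinner n b (of_plus n (plus_vec n x)) = cinner n b x"
    unfolding cinner_def by (intro sum.cong) (auto simp: of_plus_def plus_vec_def complex_eq_iff)
  then show ?thesis by (simp add: intens_eq_cmod_cinner)
qed

lemma cmod_cinner_mult_phase:
  assumes "cmod w = 1"
  shows "cmod (cinner n b (\<lambda>j. x j * w)) = cmod (cinner n b x)"
proof -
  have "cinner n b (\<lambda>j. x j * w) = cnj w * cinner n b x"
    by (simp add: cinner_def sum_distrib_left ac_simps)
  then show ?thesis
    by (simp add: norm_mult assms)
qed

lemma pr_obj_eq:
  "pr_obj n m a xn u = (\<Sum>i<m. (intens n (a i) u - (cmod (cinner n (a i) xn))\<^sup>2)\<^sup>2)"
  by (simp add: pr_obj_def intens_eq_cmod_cinner)

lemma intens_form_self: "intens_form n b v v = intens n b v"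
  by (simp add: intens_form_def intens_def power2_eq_square)

lemma intens_form_commute: "intens_form n b v w = intens_form n b w v"
  by (simp add: intens_form_def mult.commute)

lemma re_inner_lincomb:
  "re_inner n b (\<lambda>j. x * u j + y * v j) = x * re_inner n b u + y * re_inner n b v"
  "re_inner n b (imul n (\<lambda>j. x * u j + y * v j)) = x * re_inner n b (imul n u) + y * re_inner n b (imul n v)"
  by (simp_all add: re_inner_def imul_lincomb rdot_lincomb_right)

lemma re_inner_line:
  "re_inner n b (\<lambda>j. u j + t * v j) = re_inner n b u + t * re_inner n b v"
  "re_inner n b (imul n (\<lambda>j. u j + t * v j)) = re_inner n b (imul n u) + t * re_inner n b (imul n v)"
  using re_inner_lincomb[of n b 1 u t v] by simp_all

lemma intens_line:
  "intens n b (\<lambda>j. u j + t * v j) = intens n b u + 2 * t * intens_form n b u v + t\<^sup>2 * intens n b v"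
  by (simp add: intens_def intens_form_def re_inner_line power2_eq_square algebra_simps)

lemma intens_form_line:
  "intens_form n b (\<lambda>j. u j + t * v j) w = intens_form n b u w + t * intens_form n b v w"
  by (simp add: intens_form_def re_inner_line algebra_simps)

lemma intens_scale: "intens n b (\<lambda>j. c * u j) = c\<^sup>2 * intens n b u"
  and intens_form_scale_left: "intens_form n b (\<lambda>j. c * u j) v = c * intens_form n b u v"
  using re_inner_lincomb[of n b c u 0 u]
  by (simp_all add: intens_def intens_form_def power_mult_distrib algebra_simps)

lemma intens_form_scale_right: "intens_form n b u (\<lambda>j. c * v j) = c * intens_form n b u v"
  using intens_form_scale_left[of n b c v u] by (simp add: intens_form_commute)

lemma exists_phase_aligned:
  fixes xn :: "nat \<Rightarrow> complex"
  shows "\<exists>w. cmod w = 1 \<and> rdot (2*n) u (imul n (plus_vec n (\<lambda>j. xn j * w))) = 0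
           \<and> 0 \<le> rdot (2*n) u (plus_vec n (\<lambda>j. xn j * w))"
proof -
  define \<zeta> where "\<zeta> = cinner n xn (of_plus n u)"
  define w where "w = (if \<zeta> = 0 then 1 else cnj \<zeta> / cmod \<zeta>)"
  let ?b = "plus_vec n (\<lambda>j. xn j * w)"
  have "cmod w = 1"
    by (simp add: w_def norm_divide)
  have "cinner n (\<lambda>j. xn j * w) (of_plus n u) = w * \<zeta>"
    by (simp add: \<zeta>_def cinner_def sum_distrib_left ac_simps)
  also have "\<dots> = of_real (cmod \<zeta>)"
    by (auto simp: w_def complex_norm_square[symmetric] power2_eq_square field_simps)
  finally have "rdot (2*n) ?b u = cmod \<zeta>" "rdot (2*n) ?b (imul n u) = 0"
    by (simp_all add: cinner_of_plus re_inner_def complex_eq_iff)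
  then show ?thesis
    using \<open>cmod w = 1\<close> rdot_imul_antisym[of n u ?b]
    by (intro exI[of _ w]) (simp add: rdot_commute[of _ u])
qed

section \<open>Pairings with the tensors \<open>T\<close> and \<open>S\<close>\<close>

lemma tensor_pair_add:
  "tensor_pair N (\<lambda>i1 i2 i3 i4. R i1 i2 i3 i4 + R' i1 i2 i3 i4) u1 u2 u3 u4
     = tensor_pair N R u1 u2 u3 u4 + tensor_pair N R' u1 u2 u3 u4"
  by (simp add: tensor_pair_def sum.distrib distrib_right)

lemma tensor_pair_diff:
  "tensor_pair N (\<lambda>i1 i2 i3 i4. R i1 i2 i3 i4 - R' i1 i2 i3 i4) u1 u2 u3 u4
     = tensor_pair N R u1 u2 u3 u4 - tensor_pair N R' u1 u2 u3 u4"
  by (simp add: tensor_pair_def sum_subtractf left_diff_distrib)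

lemma tensor_pair_cmult:
  "tensor_pair N (\<lambda>i1 i2 i3 i4. c * R i1 i2 i3 i4) u1 u2 u3 u4 = c * tensor_pair N R u1 u2 u3 u4"
  by (simp add: tensor_pair_def sum_distrib_left mult.assoc)

lemma tensor_pair_sum:
  "finite I \<Longrightarrow> tensor_pair N (\<lambda>i1 i2 i3 i4. \<Sum>i\<in>I. R i i1 i2 i3 i4) u1 u2 u3 u4
     = (\<Sum>i\<in>I. tensor_pair N (R i) u1 u2 u3 u4)"
  by (induction I rule: finite_induct) (simp_all add: tensor_pair_add, simp add: tensor_pair_def)

lemma tensor_pair_rank1:
  "tensor_pair N (\<lambda>i1 i2 i3 i4. g i1 * g i2 * g i3 * g i4) u1 u2 u3 u4
     = rdot N g u1 * rdot N g u2 * rdot N g u3 * rdot N g u4"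
proof -
  have "tensor_pair N (\<lambda>i1 i2 i3 i4. g i1 * g i2 * g i3 * g i4) u1 u2 u3 u4 =
      (\<Sum>i1<N. g i1 * u1 i1 * (\<Sum>i2<N. g i2 * u2 i2 * (\<Sum>i3<N. g i3 * u3 i3 *
         (\<Sum>i4<N. g i4 * u4 i4))))"
    by (simp add: tensor_pair_def sum_distrib_left ac_simps)
  then show ?thesis
    by (simp add: rdot_def sum_distrib_right mult.assoc)
qed

lemma tensor_pair_S:
  "tensor_pair N S_tensor u1 u2 u3 u4
     = rdot N u1 u2 * rdot N u3 u4 + rdot N u1 u3 * rdot N u2 u4 + rdot N u1 u4 * rdot N u2 u3"
proof -
  have if_conj: "(if A \<and> B then x else 0) = (if A then if B then x else 0 else (0::real))"
    and if_zero_mult: "(if A then x else 0) * y = (if A then x * y else (0::real))"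
    and sum_if_zero: "(\<Sum>k\<in>K. if A then f k else 0) = (if A then sum f K else (0::real))"
    for A B x y and f :: "nat \<Rightarrow> real" and K
    by simp_all
  have "tensor_pair N (\<lambda>i1 i2 i3 i4. if i1 = i2 \<and> i3 = i4 then 1 else 0) u1 u2 u3 u4
      = rdot N u1 u2 * rdot N u3 u4"
    "tensor_pair N (\<lambda>i1 i2 i3 i4. if i1 = i3 \<and> i2 = i4 then 1 else 0) u1 u2 u3 u4
      = rdot N u1 u3 * rdot N u2 u4"
    "tensor_pair N (\<lambda>i1 i2 i3 i4. if i1 = i4 \<and> i2 = i3 then 1 else 0) u1 u2 u3 u4
      = rdot N u1 u4 * rdot N u2 u3"
    unfolding tensor_pair_def rdot_def sum_product
    by (simp_all only: if_conj if_zero_mult) (simp_all add: sum_if_zero sum.delta sum.delta' ac_simps)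
  then show ?thesis
    unfolding S_tensor_def tensor_pair_add by simp
qed

lemma tensor_pair_T:
  "tensor_pair (2*n) (T_tensor n m \<sigma> a) u1 u2 u3 u4 =
     (\<Sum>i<m. re_inner n (a i) u1 * re_inner n (a i) u2 * re_inner n (a i) u3 * re_inner n (a i) u4)
       / (real m * \<sigma>^4)"
  unfolding T_tensor_def tensor_pair_cmult tensor_pair_sum[OF finite_lessThan] tensor_pair_rank1
  by (simp add: re_inner_def)

lemma tensor_pair_first_cmult:
  "tensor_pair N R (\<lambda>j. c * u1 j) u2 u3 u4 = c * tensor_pair N R u1 u2 u3 u4"
  by (simp add: tensor_pair_def sum_distrib_left ac_simps)

lemma tensor_pair_first_uminus:
  "tensor_pair N R (\<lambda>j. - u1 j) u2 u3 u4 = - tensor_pair N R u1 u2 u3 u4"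
  using tensor_pair_first_cmult[of N R "-1" u1] by simp

lemma abs_tensor_pair_le:
  "\<bar>tensor_pair N R u1 u2 u3 u4\<bar> \<le>
     (\<Sum>i1<N. \<Sum>i2<N. \<Sum>i3<N. \<Sum>i4<N. \<bar>R i1 i2 i3 i4\<bar>) *
     (rnorm N u1 * rnorm N u2 * rnorm N u3 * rnorm N u4)"
proof -
  let ?P = "rnorm N u1 * rnorm N u2 * rnorm N u3 * rnorm N u4"
  have "\<bar>R i1 i2 i3 i4 * u1 i1 * u2 i2 * u3 i3 * u4 i4\<bar> \<le> \<bar>R i1 i2 i3 i4\<bar> * ?P"
    if "i1 < N" "i2 < N" "i3 < N" "i4 < N" for i1 i2 i3 i4
  proof -
    have "\<bar>u1 i1\<bar> * \<bar>u2 i2\<bar> * \<bar>u3 i3\<bar> * \<bar>u4 i4\<bar> \<le> ?P"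
      using that by (intro mult_mono abs_le_rnorm) (auto simp: rnorm_nonneg)
    then show ?thesis
      by (simp add: abs_mult mult.assoc mult_left_mono)
  qed
  then have "(\<Sum>i1<N. \<Sum>i2<N. \<Sum>i3<N. \<Sum>i4<N. \<bar>R i1 i2 i3 i4 * u1 i1 * u2 i2 * u3 i3 * u4 i4\<bar>)
      \<le> (\<Sum>i1<N. \<Sum>i2<N. \<Sum>i3<N. \<Sum>i4<N. \<bar>R i1 i2 i3 i4\<bar> * ?P)"
    by (intro sum_mono) simp
  moreover have "\<bar>tensor_pair N R u1 u2 u3 u4\<bar> \<le>
      (\<Sum>i1<N. \<Sum>i2<N. \<Sum>i3<N. \<Sum>i4<N. \<bar>R i1 i2 i3 i4 * u1 i1 * u2 i2 * u3 i3 * u4 i4\<bar>)"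
    unfolding tensor_pair_def by (rule order.trans[OF sum_abs] sum_mono)+ simp
  ultimately show ?thesis
    by (simp add: sum_distrib_right)
qed

lemma tensor_pair_le_opnorm:
  assumes "u1 \<in> rvecs N" "u2 \<in> rvecs N" "u3 \<in> rvecs N" "u4 \<in> rvecs N"
    and "rnorm N u1 * rnorm N u2 * rnorm N u3 * rnorm N u4 = 1"
  shows "tensor_pair N R u1 u2 u3 u4 \<le> tensor_opnorm N R"
proof -
  let ?A = "{tensor_pair N R u1 u2 u3 u4 | u1 u2 u3 u4.
      u1 \<in> rvecs N \<and> u2 \<in> rvecs N \<and> u3 \<in> rvecs N \<and> u4 \<in> rvecs N \<and>
      rnorm N u1 * rnorm N u2 * rnorm N u3 * rnorm N u4 = 1}"
  have "bdd_above ?A"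
  proof (rule bdd_aboveI)
    fix x
    assume "x \<in> ?A"
    then obtain w1 w2 w3 w4 where "x = tensor_pair N R w1 w2 w3 w4"
      and "rnorm N w1 * rnorm N w2 * rnorm N w3 * rnorm N w4 = 1"
      by blast
    then show "x \<le> (\<Sum>i1<N. \<Sum>i2<N. \<Sum>i3<N. \<Sum>i4<N. \<bar>R i1 i2 i3 i4\<bar>)"
      using abs_tensor_pair_le[of N R w1 w2 w3 w4] by simp
  qed
  moreover have "tensor_pair N R u1 u2 u3 u4 \<in> ?A"
    using assms by blast
  ultimately show ?thesis
    unfolding tensor_opnorm_def by (rule cSup_upper[rotated])
qed

lemma abs_tensor_pair_le_opnorm:
  assumes "u1 \<in> rvecs N" "u2 \<in> rvecs N" "u3 \<in> rvecs N" "u4 \<in> rvecs N"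
  shows "\<bar>tensor_pair N R u1 u2 u3 u4\<bar> \<le>
           tensor_opnorm N R * (rnorm N u1 * rnorm N u2 * rnorm N u3 * rnorm N u4)"
proof -
  define P where "P = rnorm N u1 * rnorm N u2 * rnorm N u3 * rnorm N u4"
  show ?thesis
  proof (cases "P = 0")
    case True
    then show ?thesis
      using abs_tensor_pair_le[of N R u1 u2 u3 u4] by (simp add: P_def[symmetric])
  next
    case False
    then have P: "P > 0"
      by (simp add: P_def rnorm_nonneg less_le)
    define w where "w = (\<lambda>j. (1 / P) * u1 j)"
    have "rnorm N w = rnorm N u1 / P"
      unfolding w_def rnorm_scale using P by simp
    moreover have "rnorm N (\<lambda>j. - w j) = rnorm N w"
      by (simp add: rnorm_def)
    ultimately have "rnorm N w * rnorm N u2 * rnorm N u3 * rnorm N u4 = 1"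
         "rnorm N (\<lambda>j. - w j) * rnorm N u2 * rnorm N u3 * rnorm N u4 = 1"
      using False by (simp_all add: P_def)
    then have "tensor_pair N R w u2 u3 u4 \<le> tensor_opnorm N R"
      "- tensor_pair N R w u2 u3 u4 \<le> tensor_opnorm N R"
      using assms unfolding tensor_pair_first_uminus[symmetric]
      by (auto intro!: tensor_pair_le_opnorm simp: w_def rvecs_def)
    moreover have "tensor_pair N R u1 u2 u3 u4 = P * tensor_pair N R w u2 u3 u4"
      unfolding w_def tensor_pair_first_cmult using P by simp
    ultimately have "\<bar>tensor_pair N R u1 u2 u3 u4\<bar> \<le> P * tensor_opnorm N R"
      using P by (simp add: abs_mult mult_left_mono)
    then show ?thesis
      by (simp add: P_def mult.commute)
  qed
qed

section \<open>Fourth moments of the measurements\<close>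

definition moment_QQ :: "nat \<Rightarrow> nat \<Rightarrow> real \<Rightarrow> (nat \<Rightarrow> cvec) \<Rightarrow> rvec \<Rightarrow> rvec \<Rightarrow> real"
  where "moment_QQ n m \<sigma> a p q =
    (\<Sum>i<m. intens n (a i) p * intens n (a i) q) / (real m * \<sigma>^4)"

definition moment_QB :: "nat \<Rightarrow> nat \<Rightarrow> real \<Rightarrow> (nat \<Rightarrow> cvec) \<Rightarrow> rvec \<Rightarrow> rvec \<Rightarrow> real"
  where "moment_QB n m \<sigma> a p q =
    (\<Sum>i<m. intens n (a i) p * intens_form n (a i) p q) / (real m * \<sigma>^4)"

definition moment_BB :: "nat \<Rightarrow> nat \<Rightarrow> real \<Rightarrow> (nat \<Rightarrow> cvec) \<Rightarrow> rvec \<Rightarrow> rvec \<Rightarrow> real"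
  where "moment_BB n m \<sigma> a p q =
    (\<Sum>i<m. (intens_form n (a i) p q)\<^sup>2) / (real m * \<sigma>^4)"

lemma moment_QQ_eq:
  "moment_QQ n m \<sigma> a p q =
     tensor_pair (2*n) (T_tensor n m \<sigma> a) p p q q
     + tensor_pair (2*n) (T_tensor n m \<sigma> a) p p (imul n q) (imul n q)
     + tensor_pair (2*n) (T_tensor n m \<sigma> a) (imul n p) (imul n p) q q
     + tensor_pair (2*n) (T_tensor n m \<sigma> a) (imul n p) (imul n p) (imul n q) (imul n q)"
  unfolding tensor_pair_T add_divide_distrib[symmetric] sum.distrib[symmetric] moment_QQ_def
  by (intro arg_cong[where f="\<lambda>x. x / _"] sum.cong) (simp_all add: intens_def power2_eq_square algebra_simps)

lemma moment_QB_eq: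
  "moment_QB n m \<sigma> a p q =
     tensor_pair (2*n) (T_tensor n m \<sigma> a) p p p q
     + tensor_pair (2*n) (T_tensor n m \<sigma> a) p p (imul n p) (imul n q)
     + tensor_pair (2*n) (T_tensor n m \<sigma> a) (imul n p) (imul n p) p q
     + tensor_pair (2*n) (T_tensor n m \<sigma> a) (imul n p) (imul n p) (imul n p) (imul n q)"
  unfolding tensor_pair_T add_divide_distrib[symmetric] sum.distrib[symmetric] moment_QB_def
  by (intro arg_cong[where f="\<lambda>x. x / _"] sum.cong)
    (simp_all add: intens_def intens_form_def power2_eq_square algebra_simps)

lemma moment_BB_eq:
  "moment_BB n m \<sigma> a p q =
     tensor_pair (2*n) (T_tensor n m \<sigma> a) p p q q
     + 2 * tensor_pair (2*n) (T_tensor n m \<sigma> a) p q (imul n p) (imul n q)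
     + tensor_pair (2*n) (T_tensor n m \<sigma> a) (imul n p) (imul n p) (imul n q) (imul n q)"
  unfolding tensor_pair_T moment_BB_def
  by (simp add: sum.distrib[symmetric] sum_distrib_left add_divide_distrib[symmetric]
      intens_form_def power2_eq_square algebra_simps)

context
  fixes n m :: nat and \<sigma> \<delta> :: real and a :: "nat \<Rightarrow> nat \<Rightarrow> complex"
  assumes T_near_S:
    "tensor_opnorm (2*n) (\<lambda>i1 i2 i3 i4. T_tensor n m \<sigma> a i1 i2 i3 i4 - S_tensor i1 i2 i3 i4) \<le> \<delta>"
begin

lemma tensor_pair_T_near_S:
  assumes "u1 \<in> rvecs (2*n)" "u2 \<in> rvecs (2*n)" "u3 \<in> rvecs (2*n)" "u4 \<in> rvecs (2*n)"
  shows "\<bar>tensor_pair (2*n) (T_tensor n m \<sigma> a) u1 u2 u3 u4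
            - (rdot (2*n) u1 u2 * rdot (2*n) u3 u4 + rdot (2*n) u1 u3 * rdot (2*n) u2 u4
               + rdot (2*n) u1 u4 * rdot (2*n) u2 u3)\<bar>
           \<le> \<delta> * (rnorm (2*n) u1 * rnorm (2*n) u2 * rnorm (2*n) u3 * rnorm (2*n) u4)"
proof -
  have "\<bar>tensor_pair (2*n) (\<lambda>i1 i2 i3 i4. T_tensor n m \<sigma> a i1 i2 i3 i4 - S_tensor i1 i2 i3 i4) u1 u2 u3 u4\<bar>
      \<le> tensor_opnorm (2*n) (\<lambda>i1 i2 i3 i4. T_tensor n m \<sigma> a i1 i2 i3 i4 - S_tensor i1 i2 i3 i4)
         * (rnorm (2*n) u1 * rnorm (2*n) u2 * rnorm (2*n) u3 * rnorm (2*n) u4)"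
    by (rule abs_tensor_pair_le_opnorm[OF assms])
  also have "\<dots> \<le> \<delta> * (rnorm (2*n) u1 * rnorm (2*n) u2 * rnorm (2*n) u3 * rnorm (2*n) u4)"
    by (intro mult_right_mono T_near_S) (simp add: rnorm_nonneg)
  finally show ?thesis
    by (simp add: tensor_pair_diff tensor_pair_S)
qed

lemma moment_QQ_approx:
  assumes p: "p \<in> rvecs (2*n)" and q: "q \<in> rvecs (2*n)"
  shows "\<bar>moment_QQ n m \<sigma> a p q - (4 * (rnorm (2*n) p)\<^sup>2 * (rnorm (2*n) q)\<^sup>2
            + 4 * (rdot (2*n) p q)\<^sup>2 + 4 * (rdot (2*n) p (imul n q))\<^sup>2)\<bar>
           \<le> 4 * \<delta> * ((rnorm (2*n) p)\<^sup>2 * (rnorm (2*n) q)\<^sup>2)"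
proof -
  let ?W = "tensor_pair (2*n) (T_tensor n m \<sigma> a)" and ?p = "imul n p" and ?q = "imul n q"
  let ?P = "(rnorm (2*n) p)\<^sup>2 * (rnorm (2*n) q)\<^sup>2"
    and ?s = "rdot (2*n) p q" and ?t = "rdot (2*n) p (imul n q)"
  note Mp = imul_in_rvecs[of n p] and Mq = imul_in_rvecs[of n q]
  have "\<bar>?W p p q q - (?P + 2 * ?s\<^sup>2)\<bar> \<le> \<delta> * ?P"
    using tensor_pair_T_near_S[OF p p q q] by (simp add: rdot_self_eq_rnorm_sq power2_eq_square ac_simps)
  moreover have "\<bar>?W p p ?q ?q - (?P + 2 * ?t\<^sup>2)\<bar> \<le> \<delta> * ?P"
    using tensor_pair_T_near_S[OF p p Mq Mq]
    by (simp only: rnorm_imul rdot_imul_imul) (simp add: rdot_self_eq_rnorm_sq power2_eq_square ac_simps)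
  moreover have "\<bar>?W ?p ?p q q - (?P + 2 * ?t\<^sup>2)\<bar> \<le> \<delta> * ?P"
    using tensor_pair_T_near_S[OF Mp Mp q q]
    by (simp only: rnorm_imul rdot_imul_imul rdot_imul_left[of n p q])
      (simp add: rdot_self_eq_rnorm_sq power2_eq_square ac_simps)
  moreover have "\<bar>?W ?p ?p ?q ?q - (?P + 2 * ?s\<^sup>2)\<bar> \<le> \<delta> * ?P"
    using tensor_pair_T_near_S[OF Mp Mp Mq Mq]
    by (simp only: rnorm_imul rdot_imul_imul) (simp add: rdot_self_eq_rnorm_sq power2_eq_square ac_simps)
  ultimately show ?thesis
    unfolding moment_QQ_eq abs_le_iff mult.assoc by (safe; linarith)
qed

lemma moment_QB_approx:
  assumes p: "p \<in> rvecs (2*n)" and q: "q \<in> rvecs (2*n)"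
  shows "\<bar>moment_QB n m \<sigma> a p q - 8 * (rnorm (2*n) p)\<^sup>2 * rdot (2*n) p q\<bar>
           \<le> 4 * \<delta> * ((rnorm (2*n) p)\<^sup>2 * (rnorm (2*n) p * rnorm (2*n) q))"
proof -
  let ?W = "tensor_pair (2*n) (T_tensor n m \<sigma> a)" and ?p = "imul n p" and ?q = "imul n q"
  let ?P = "(rnorm (2*n) p)\<^sup>2 * (rnorm (2*n) p * rnorm (2*n) q)"
    and ?A = "(rnorm (2*n) p)\<^sup>2 * rdot (2*n) p q"
  note Mp = imul_in_rvecs[of n p] and Mq = imul_in_rvecs[of n q]
  have "\<bar>?W p p p q - 3 * ?A\<bar> \<le> \<delta> * ?P"
    using tensor_pair_T_near_S[OF p p p q] by (simp add: rdot_self_eq_rnorm_sq power2_eq_square ac_simps)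
  moreover have "\<bar>?W p p ?p ?q - ?A\<bar> \<le> \<delta> * ?P"
    using tensor_pair_T_near_S[OF p p Mp Mq]
    by (simp only: rnorm_imul rdot_imul_imul rdot_imul_self)
      (simp add: rdot_self_eq_rnorm_sq power2_eq_square ac_simps)
  moreover have "\<bar>?W ?p ?p p q - ?A\<bar> \<le> \<delta> * ?P"
    using tensor_pair_T_near_S[OF Mp Mp p q]
    by (simp only: rnorm_imul rdot_imul_imul rdot_imul_self)
      (simp add: rdot_self_eq_rnorm_sq power2_eq_square ac_simps)
  moreover have "\<bar>?W ?p ?p ?p ?q - 3 * ?A\<bar> \<le> \<delta> * ?P"
    using tensor_pair_T_near_S[OF Mp Mp Mp Mq]
    by (simp only: rnorm_imul rdot_imul_imul) (simp add: rdot_self_eq_rnorm_sq power2_eq_square ac_simps)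
  ultimately show ?thesis
    unfolding moment_QB_eq abs_le_iff mult.assoc by (safe; linarith)
qed

lemma moment_BB_approx:
  assumes p: "p \<in> rvecs (2*n)" and q: "q \<in> rvecs (2*n)"
  shows "\<bar>moment_BB n m \<sigma> a p q - (2 * (rnorm (2*n) p)\<^sup>2 * (rnorm (2*n) q)\<^sup>2
            + 6 * (rdot (2*n) p q)\<^sup>2 - 2 * (rdot (2*n) p (imul n q))\<^sup>2)\<bar>
           \<le> 4 * \<delta> * ((rnorm (2*n) p)\<^sup>2 * (rnorm (2*n) q)\<^sup>2)"
proof -
  let ?W = "tensor_pair (2*n) (T_tensor n m \<sigma> a)" and ?p = "imul n p" and ?q = "imul n q"
  let ?P = "(rnorm (2*n) p)\<^sup>2 * (rnorm (2*n) q)\<^sup>2"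
    and ?s = "rdot (2*n) p q" and ?t = "rdot (2*n) p (imul n q)"
  note Mp = imul_in_rvecs[of n p] and Mq = imul_in_rvecs[of n q]
  have "\<bar>?W p p q q - (?P + 2 * ?s\<^sup>2)\<bar> \<le> \<delta> * ?P"
    using tensor_pair_T_near_S[OF p p q q] by (simp add: rdot_self_eq_rnorm_sq power2_eq_square ac_simps)
  moreover have "\<bar>?W p q ?p ?q - (?s\<^sup>2 - ?t\<^sup>2)\<bar> \<le> \<delta> * ?P"
    using tensor_pair_T_near_S[OF p q Mp Mq]
    by (simp only: rnorm_imul rdot_imul_imul rdot_imul_self rdot_imul_antisym[of n q p])
      (simp add: power2_eq_square ac_simps)
  moreover have "\<bar>?W ?p ?p ?q ?q - (?P + 2 * ?s\<^sup>2)\<bar> \<le> \<delta> * ?P"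
    using tensor_pair_T_near_S[OF Mp Mp Mq Mq]
    by (simp only: rnorm_imul rdot_imul_imul) (simp add: rdot_self_eq_rnorm_sq power2_eq_square ac_simps)
  ultimately show ?thesis
    unfolding moment_BB_eq abs_le_iff mult.assoc by (safe; linarith)
qed

end

section \<open>First and second variations of the objective\<close>

text \<open>For \<open>F u = (\<Sum>i<m. (intens n (a i) u - y i)\<^sup>2)\<close> one has
  \<open>F (u + t w) = F u + 4 t first_var y u w + 2 t\<^sup>2 second_var y u w w + O(t\<^sup>3)\<close>.\<close>
definition first_var ::
    "nat \<Rightarrow> nat \<Rightarrow> (nat \<Rightarrow> cvec) \<Rightarrow> (nat \<Rightarrow> real) \<Rightarrow> rvec \<Rightarrow> rvec \<Rightarrow> real" where
  "first_var n m a y u w = (\<Sum>i<m. (intens n (a i) u - y i) * intens_form n (a i) u w)"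

definition second_var ::
    "nat \<Rightarrow> nat \<Rightarrow> (nat \<Rightarrow> cvec) \<Rightarrow> (nat \<Rightarrow> real) \<Rightarrow> rvec \<Rightarrow> rvec \<Rightarrow> rvec \<Rightarrow> real" where
  "second_var n m a y u v w =
     (\<Sum>i<m. 2 * intens_form n (a i) u v * intens_form n (a i) u w
        + (intens n (a i) u - y i) * intens_form n (a i) v w)"

lemma intens_form_sq_le:
  "(intens_form n b r h)\<^sup>2 - (intens n b h)\<^sup>2 \<le>
     2 * (intens n b (\<lambda>j. r j + h j) - intens n b r) * intens_form n b (\<lambda>j. r j + h j) h"
proof -
  let ?B = "intens_form n b r h" and ?Q = "intens n b h"
  have "intens n b (\<lambda>j. r j + h j) - intens n b r = 2 * ?B + ?Q"
    using intens_line[of n b r 1 h] by simp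
  moreover have "intens_form n b (\<lambda>j. r j + h j) h = ?B + ?Q"
    using intens_form_line[of n b r 1 h h] by (simp add: intens_form_self)
  moreover have "2 * (2 * ?B + ?Q) * (?B + ?Q) - (?B\<^sup>2 - ?Q\<^sup>2) = 3 * (?B + ?Q)\<^sup>2"
    by algebra
  ultimately show ?thesis
    by (metis diff_ge_0_iff_ge mult_nonneg_nonneg zero_le_numeral zero_le_power2)
qed

lemma first_var_scale:
  "first_var n m a (\<lambda>i. intens n (a i) (\<lambda>j. c * r j)) (\<lambda>j. c * u j) w
     = c^3 * first_var n m a (\<lambda>i. intens n (a i) r) u w"
  by (simp add: first_var_def intens_scale intens_form_scale_left sum_distrib_left
      power2_eq_square power3_eq_cube algebra_simps)

lemma second_var_scale:
  "second_var n m a (\<lambda>i. intens n (a i) (\<lambda>j. c * r j)) (\<lambda>j. c * u j) (\<lambda>j. c * r j) (\<lambda>j. c * r j)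
     = c^4 * second_var n m a (\<lambda>i. intens n (a i) r) u r r"
  by (simp add: second_var_def intens_scale intens_form_scale_left intens_form_scale_right
      sum_distrib_left power2_eq_square power4_eq_xxxx algebra_simps)

lemma first_var_self_eq_moments:
  "first_var n m a (\<lambda>i. intens n (a i) r) u u / (real m * \<sigma>^4)
     = moment_QQ n m \<sigma> a u u - moment_QQ n m \<sigma> a r u"
  by (simp add: first_var_def moment_QQ_def intens_form_self diff_divide_distrib[symmetric]
      sum_subtractf[symmetric] algebra_simps)

lemma first_var_target_eq_moments:
  "first_var n m a (\<lambda>i. intens n (a i) r) u r / (real m * \<sigma>^4)
     = moment_QB n m \<sigma> a u r - moment_QB n m \<sigma> a r u"
  by (simp add: first_var_def moment_QB_def intens_form_commute[of n _ r u] diff_divide_distrib[symmetric]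
      sum_subtractf[symmetric] left_diff_distrib)

lemma second_var_target_eq_moments:
  "second_var n m a (\<lambda>i. intens n (a i) r) u r r / (real m * \<sigma>^4)
     = 2 * moment_BB n m \<sigma> a u r + moment_QQ n m \<sigma> a u r - moment_QQ n m \<sigma> a r r"
  by (simp add: second_var_def moment_BB_def moment_QQ_def intens_form_self power2_eq_square mult.assoc
      sum.distrib sum_subtractf sum_distrib_left add_divide_distrib diff_divide_distrib left_diff_distrib)

lemma moments_diff_le_first_var:
  "moment_BB n m \<sigma> a r (\<lambda>j. u j - r j) - moment_QQ n m \<sigma> a (\<lambda>j. u j - r j) (\<lambda>j. u j - r j)
     \<le> 2 * first_var n m a (\<lambda>i. intens n (a i) r) u (\<lambda>j. u j - r j) / (real m * \<sigma>^4)"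
proof -
  let ?h = "\<lambda>j. u j - r j"
  have "(\<Sum>i<m. (intens_form n (a i) r ?h)\<^sup>2 - (intens n (a i) ?h)\<^sup>2)
      \<le> (\<Sum>i<m. 2 * ((intens n (a i) u - intens n (a i) r) * intens_form n (a i) u ?h))"
  proof (rule sum_mono)
    fix i
    show "(intens_form n (a i) r ?h)\<^sup>2 - (intens n (a i) ?h)\<^sup>2
        \<le> 2 * ((intens n (a i) u - intens n (a i) r) * intens_form n (a i) u ?h)"
      using intens_form_sq_le[of n "a i" r ?h] by (simp add: algebra_simps)
  qed
  then show ?thesis
    by (simp add: moment_BB_def moment_QQ_def first_var_def diff_divide_distrib[symmetric]
        sum_subtractf sum_distrib_left power2_eq_square divide_right_mono)
qed

lemma residual_sum_line:
  "(\<Sum>i<m. (intens n (a i) (\<lambda>j. u j + t * w j) - y i)\<^sup>2) =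
     (\<Sum>i<m. (intens n (a i) u - y i)\<^sup>2) + t * (4 * first_var n m a y u w)
     + t\<^sup>2 * (2 * second_var n m a y u w w)
     + t^3 * (4 * (\<Sum>i<m. intens_form n (a i) u w * intens n (a i) w))
     + t^4 * (\<Sum>i<m. (intens n (a i) w)\<^sup>2)"
proof -
  have "(intens n b (\<lambda>j. u j + t * w j) - z)\<^sup>2 =
      (intens n b u - z)\<^sup>2 + t * (4 * ((intens n b u - z) * intens_form n b u w))
      + t\<^sup>2 * (2 * (2 * intens_form n b u w * intens_form n b u w + (intens n b u - z) * intens_form n b w w))
      + t^3 * (4 * (intens_form n b u w * intens n b w)) + t^4 * (intens n b w)\<^sup>2" for b z
    by (simp add: intens_line intens_form_self power2_eq_square power3_eq_cube power4_eq_xxxx algebra_simps)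
  then show ?thesis
    by (simp add: first_var_def second_var_def sum.distrib sum_distrib_left distrib_left)
qed

lemma first_var_line:
  "first_var n m a y (\<lambda>j. u j + t * v j) w =
     first_var n m a y u w + t * second_var n m a y u v w
     + t\<^sup>2 * (\<Sum>i<m. 2 * intens_form n (a i) u v * intens_form n (a i) v w
                 + intens n (a i) v * intens_form n (a i) u w)
     + t^3 * (\<Sum>i<m. intens n (a i) v * intens_form n (a i) v w)"
proof -
  have "(intens n b (\<lambda>j. u j + t * v j) - z) * intens_form n b (\<lambda>j. u j + t * v j) w =
      (intens n b u - z) * intens_form n b u w
      + t * (2 * intens_form n b u v * intens_form n b u w + (intens n b u - z) * intens_form n b v w)
      + t\<^sup>2 * (2 * intens_form n b u v * intens_form n b v w + intens n b v * intens_form n b u w)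
      + t^3 * (intens n b v * intens_form n b v w)" for b z
    by (simp add: intens_line intens_form_line power2_eq_square power3_eq_cube algebra_simps)
  then show ?thesis
    by (simp add: first_var_def second_var_def sum.distrib sum_distrib_left distrib_left)
qed

lemma intens_form_basis_expand:
  "(\<Sum>j<2*n. v j * intens_form n b x (basis_r j)) = intens_form n b x v"
proof -
  let ?g = "plus_vec n b"
  have "re_inner n b (basis_r j) = ?g j" "re_inner n b (imul n (basis_r j)) = - imul n ?g j"
    if "j < 2*n" for j
    using that by (simp_all add: re_inner_def rdot_basis_r rdot_imul_right[of n ?g])
  then have "(\<Sum>j<2*n. v j * intens_form n b x (basis_r j)) =
      re_inner n b x * rdot (2*n) ?g v - re_inner n b (imul n x) * rdot (2*n) (imul n ?g) v"
    by (simp add: intens_form_def rdot_def sum_subtractf sum_distrib_left algebra_simps)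
  also have "\<dots> = intens_form n b x v"
    by (simp add: intens_form_def re_inner_def rdot_imul_right[of n ?g])
  finally show ?thesis .
qed

lemma sum_basis_intens_form:
  "(\<Sum>j<2*n. v j * (\<Sum>i<m. f i * intens_form n (a i) (x i) (basis_r j)))
     = (\<Sum>i<m. f i * intens_form n (a i) (x i) v)"
proof -
  have "(\<Sum>j<2*n. v j * (\<Sum>i<m. f i * intens_form n (a i) (x i) (basis_r j)))
      = (\<Sum>j<2*n. \<Sum>i<m. f i * (v j * intens_form n (a i) (x i) (basis_r j)))"
    by (simp add: sum_distrib_left mult.left_commute)
  also have "\<dots> = (\<Sum>i<m. f i * (\<Sum>j<2*n. v j * intens_form n (a i) (x i) (basis_r j)))"
    by (subst sum.swap) (simp add: sum_distrib_left)
  finally show ?thesis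
    by (simp add: intens_form_basis_expand)
qed

lemma first_var_basis_expand:
  "(\<Sum>j<2*n. v j * first_var n m a y u (basis_r j)) = first_var n m a y u v"
  unfolding first_var_def by (rule sum_basis_intens_form)

lemma second_var_commute: "second_var n m a y u v w = second_var n m a y u w v"
  by (simp add: second_var_def intens_form_commute[of n _ v w] ac_simps)

lemma second_var_basis_expand:
  "(\<Sum>j<2*n. v j * second_var n m a y u w (basis_r j)) = second_var n m a y u w v"
  using sum_basis_intens_form[where f = "\<lambda>i. 2 * intens_form n (a i) u w" and x = "\<lambda>_. u"]
    sum_basis_intens_form[where f = "\<lambda>i. intens n (a i) u - y i" and x = "\<lambda>_. w"]
  by (simp add: second_var_def sum.distrib distrib_left)

lemma second_var_basis_expand_left:
  "(\<Sum>j<2*n. v j * second_var n m a y u (basis_r j) w) = second_var n m a y u v w"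
  using second_var_basis_expand[where n = n and v = v and u = u and w = w] by (simp add: second_var_commute[of _ _ _ _ _ w])

section \<open>Critical points aligned with the signal\<close>

lemma aligned_moment_bounds_coarse:
  fixes X \<tau> :: real
  assumes X: "0 \<le> X" and \<tau>: "\<tau>\<^sup>2 \<le> X"
    and grad_u: "\<bar>2 * X\<^sup>2 - X - \<tau>\<^sup>2\<bar> \<le> 1/1000 * (X\<^sup>2 + X)"
    and hess_r: "0 \<le> 2 * X + 4 * \<tau>\<^sup>2 - 2 + 3/1000 * X + 1/1000"
  shows "63/100 \<le> X" "X \<le> 101/100"
proof -
  from grad_u have gu: "2 * X\<^sup>2 - X - \<tau>\<^sup>2 \<le> 1/1000 * X\<^sup>2 + 1/1000 * X"
      "X + \<tau>\<^sup>2 - 2 * X\<^sup>2 \<le> 1/1000 * X\<^sup>2 + 1/1000 * X"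
    by (auto simp: abs_le_iff distrib_left)
  show "X \<le> 101/100"
  proof (rule ccontr)
    assume "\<not> ?thesis"
    then have "101/100 * X < X\<^sup>2"
      unfolding power2_eq_square by (intro mult_strict_right_mono) auto
    then show False
      using gu(1) \<tau> X by linarith
  qed
  show "63/100 \<le> X"
  proof (rule ccontr)
    assume X_small: "\<not> ?thesis"
    then have "X\<^sup>2 \<le> 63/100 * X"
      unfolding power2_eq_square using X by (intro mult_right_mono) auto
    then show False
      using gu(2) hess_r X_small by linarith
  qed
qed

lemma aligned_moment_bounds_fine:
  fixes X \<alpha> \<tau> :: real
  assumes \<alpha>: "0 \<le> \<alpha>" "X = \<alpha>\<^sup>2" and \<tau>: "0 \<le> \<tau>" "\<tau>\<^sup>2 \<le> X"
    and grad_u: "\<bar>2 * X\<^sup>2 - X - \<tau>\<^sup>2\<bar> \<le> 1/1000 * (X\<^sup>2 + X)"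
    and grad_r: "\<bar>2 * \<tau> * (X - 1)\<bar> \<le> 1/1000 * (\<alpha> * (X + 1))"
    and hess_r: "0 \<le> 2 * X + 4 * \<tau>\<^sup>2 - 2 + 3/1000 * X + 1/1000"
  shows "\<bar>X - 1\<bar> \<le> 3/1000" "99/100 \<le> \<tau>"
proof -
  have X: "0 \<le> X"
    using \<alpha> by simp
  note X_bounds = aligned_moment_bounds_coarse[OF X \<tau>(2) grad_u hess_r]
  from grad_u have gu: "2 * X\<^sup>2 - X - \<tau>\<^sup>2 \<le> 1/1000 * X\<^sup>2 + 1/1000 * X"
    by (simp add: abs_le_iff distrib_left)
  have \<alpha>_upper: "\<alpha> \<le> 101/100"
  proof (cases "\<alpha> \<le> 1")
    case False
    then have "\<alpha> * 1 \<le> \<alpha> * \<alpha>"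
      by (intro mult_left_mono) auto
    then show ?thesis
      using X_bounds(2) \<alpha>(2) by (simp add: power2_eq_square)
  qed simp
  have "63/100 * X \<le> X\<^sup>2"
    unfolding power2_eq_square using X X_bounds(1) by (intro mult_right_mono) auto
  then have "(4/10)\<^sup>2 \<le> \<tau>\<^sup>2"
    using gu X_bounds(1) by (simp add: power_divide)
  then have \<tau>_lower: "4/10 \<le> \<tau>"
    using \<tau>(1) by (rule power2_le_imp_le)
  define d where "d = \<bar>X - 1\<bar>"
  have "\<alpha> * (X + 1) \<le> 101/100 * (101/100 + 1)"
    using \<alpha>_upper X_bounds(2) \<alpha>(1) X by (intro mult_mono) auto
  then have "\<alpha> * (X + 1) \<le> 21/10"
    by simp
  moreover have "4/10 * d \<le> \<tau> * d"
    using \<tau>_lower by (intro mult_right_mono) (auto simp: d_def)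
  moreover have "2 * (\<tau> * d) \<le> 1/1000 * (\<alpha> * (X + 1))"
    using grad_r \<tau>(1) by (simp add: abs_mult d_def)
  ultimately show X_near_1: "\<bar>X - 1\<bar> \<le> 3/1000"
    unfolding d_def[symmetric] by linarith
  then have X_lower: "997/1000 \<le> X"
    unfolding abs_le_iff by linarith
  then have "997/1000 * X \<le> X\<^sup>2"
    unfolding power2_eq_square using X by (intro mult_right_mono) auto
  then have "(99/100)\<^sup>2 \<le> \<tau>\<^sup>2"
    using gu X_lower by (simp add: power_divide)
  then show "99/100 \<le> \<tau>"
    using \<tau>(1) by (rule power2_le_imp_le)
qed

lemma aligned_moment_bounds_imp_eq:
  fixes X \<alpha> \<tau> \<eta> :: real
  assumes \<alpha>: "0 \<le> \<alpha>" "X = \<alpha>\<^sup>2" and \<tau>: "0 \<le> \<tau>" "\<tau>\<^sup>2 \<le> X"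
    and \<eta>: "\<eta> = X - 2 * \<tau> + 1"
    and grad_u: "\<bar>2 * X\<^sup>2 - X - \<tau>\<^sup>2\<bar> \<le> 1/1000 * (X\<^sup>2 + X)"
    and grad_r: "\<bar>2 * \<tau> * (X - 1)\<bar> \<le> 1/1000 * (\<alpha> * (X + 1))"
    and hess_r: "0 \<le> 2 * X + 4 * \<tau>\<^sup>2 - 2 + 3/1000 * X + 1/1000"
    and grad_h: "2 * \<eta> \<le> 4/1000 * \<eta> + 8004/1000 * \<eta>\<^sup>2"
  shows "\<eta> = 0"
proof -
  have "\<tau> \<le> \<alpha>"
    using power2_le_imp_le[of \<tau> \<alpha>] \<tau>(2) \<alpha> by simp
  moreover have "0 \<le> \<alpha>\<^sup>2 - 2 * \<alpha> + 1"
    using zero_le_power2[of "\<alpha> - 1"] by (simp add: power2_diff)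
  ultimately have \<eta>_nonneg: "0 \<le> \<eta>"
    unfolding \<eta> \<alpha>(2) by linarith
  have "\<eta> \<le> 23/1000"
    using aligned_moment_bounds_fine[OF \<alpha> \<tau> grad_u grad_r hess_r] \<eta> unfolding abs_le_iff by linarith
  then have "\<eta>\<^sup>2 \<le> 23/1000 * \<eta>"
    unfolding power2_eq_square using \<eta>_nonneg by (intro mult_right_mono) auto
  then show ?thesis
    using grad_h \<eta>_nonneg by linarith
qed

context
  fixes n m :: nat and \<sigma> :: real and a :: "nat \<Rightarrow> nat \<Rightarrow> complex"
  assumes T_near_S:
    "tensor_opnorm (2*n) (\<lambda>i1 i2 i3 i4. T_tensor n m \<sigma> a i1 i2 i3 i4 - S_tensor i1 i2 i3 i4) \<le> 1/1000"
begin

lemma first_var_self_bound: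
  assumes u: "u \<in> rvecs (2*n)" and r: "r \<in> rvecs (2*n)" and r_unit: "rnorm (2*n) r = 1"
    and orth: "rdot (2*n) u (imul n r) = 0"
    and crit: "first_var n m a (\<lambda>i. intens n (a i) r) u u = 0"
  shows "\<bar>2 * ((rnorm (2*n) u)\<^sup>2)\<^sup>2 - (rnorm (2*n) u)\<^sup>2 - (rdot (2*n) u r)\<^sup>2\<bar>
           \<le> 1/1000 * (((rnorm (2*n) u)\<^sup>2)\<^sup>2 + (rnorm (2*n) u)\<^sup>2)"
proof -
  define \<alpha> \<tau> where "\<alpha> = rnorm (2*n) u" and "\<tau> = rdot (2*n) u r"
  have "\<bar>moment_QQ n m \<sigma> a u u - 8 * (\<alpha>\<^sup>2)\<^sup>2\<bar> \<le> 4/1000 * (\<alpha>\<^sup>2)\<^sup>2"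
    using moment_QQ_approx[OF T_near_S u u]
    by (simp add: rdot_self_eq_rnorm_sq \<alpha>_def power2_eq_square mult.assoc)
  moreover have "\<bar>moment_QQ n m \<sigma> a r u - (4 * \<alpha>\<^sup>2 + 4 * \<tau>\<^sup>2)\<bar> \<le> 4/1000 * \<alpha>\<^sup>2"
    using moment_QQ_approx[OF T_near_S r u] r_unit orth rdot_imul_antisym[of n r u]
    by (simp add: rdot_commute[of _ r u] \<alpha>_def \<tau>_def)
  moreover have "moment_QQ n m \<sigma> a u u = moment_QQ n m \<sigma> a r u"
    using first_var_self_eq_moments[of n m a r u \<sigma>] crit by simp
  ultimately show ?thesis
    unfolding \<alpha>_def[symmetric] \<tau>_def[symmetric] abs_le_iff distrib_left by (safe; linarith)
qed

lemma first_var_target_bound: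
  assumes u: "u \<in> rvecs (2*n)" and r: "r \<in> rvecs (2*n)" and r_unit: "rnorm (2*n) r = 1"
    and crit: "first_var n m a (\<lambda>i. intens n (a i) r) u r = 0"
  shows "\<bar>2 * rdot (2*n) u r * ((rnorm (2*n) u)\<^sup>2 - 1)\<bar>
           \<le> 1/1000 * (rnorm (2*n) u * ((rnorm (2*n) u)\<^sup>2 + 1))"
proof -
  define \<alpha> \<tau> where "\<alpha> = rnorm (2*n) u" and "\<tau> = rdot (2*n) u r"
  have "\<bar>moment_QB n m \<sigma> a u r - 8 * \<alpha>\<^sup>2 * \<tau>\<bar> \<le> 4/1000 * (\<alpha>\<^sup>2 * \<alpha>)"
    using moment_QB_approx[OF T_near_S u r] r_unit by (simp add: \<alpha>_def \<tau>_def)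
  moreover have "\<bar>moment_QB n m \<sigma> a r u - 8 * \<tau>\<bar> \<le> 4/1000 * \<alpha>"
    using moment_QB_approx[OF T_near_S r u] r_unit
    by (simp add: rdot_self_eq_rnorm_sq rdot_commute[of _ r u] \<alpha>_def \<tau>_def)
  moreover have "moment_QB n m \<sigma> a u r = moment_QB n m \<sigma> a r u"
    using first_var_target_eq_moments[of n m a r u \<sigma>] crit by simp
  moreover have "2 * \<tau> * (\<alpha>\<^sup>2 - 1) = 2 * (\<alpha>\<^sup>2 * \<tau>) - 2 * \<tau>" "\<alpha> * (\<alpha>\<^sup>2 + 1) = \<alpha>\<^sup>2 * \<alpha> + \<alpha>"
    by (simp_all add: algebra_simps)
  ultimately show ?thesis
    unfolding \<alpha>_def[symmetric] \<tau>_def[symmetric] abs_le_iff distrib_left by (safe; linarith)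
qed

lemma second_var_target_bound:
  assumes u: "u \<in> rvecs (2*n)" and r: "r \<in> rvecs (2*n)" and r_unit: "rnorm (2*n) r = 1"
    and orth: "rdot (2*n) u (imul n r) = 0"
    and hess: "0 \<le> second_var n m a (\<lambda>i. intens n (a i) r) u r r"
  shows "0 \<le> 2 * (rnorm (2*n) u)\<^sup>2 + 4 * (rdot (2*n) u r)\<^sup>2 - 2 + 3/1000 * (rnorm (2*n) u)\<^sup>2 + 1/1000"
proof -
  define \<alpha> \<tau> where "\<alpha> = rnorm (2*n) u" and "\<tau> = rdot (2*n) u r"
  have "\<bar>moment_BB n m \<sigma> a u r - (2 * \<alpha>\<^sup>2 + 6 * \<tau>\<^sup>2)\<bar> \<le> 4/1000 * \<alpha>\<^sup>2"
    using moment_BB_approx[OF T_near_S u r] r_unit orth by (simp add: \<alpha>_def \<tau>_def)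
  moreover have "\<bar>moment_QQ n m \<sigma> a u r - (4 * \<alpha>\<^sup>2 + 4 * \<tau>\<^sup>2)\<bar> \<le> 4/1000 * \<alpha>\<^sup>2"
    using moment_QQ_approx[OF T_near_S u r] r_unit orth by (simp add: \<alpha>_def \<tau>_def)
  moreover have "\<bar>moment_QQ n m \<sigma> a r r - 8\<bar> \<le> 4/1000"
    using moment_QQ_approx[OF T_near_S r r] r_unit by (simp add: rdot_self_eq_rnorm_sq)
  moreover have "0 \<le> 2 * moment_BB n m \<sigma> a u r + moment_QQ n m \<sigma> a u r - moment_QQ n m \<sigma> a r r"
    using hess by (simp add: second_var_target_eq_moments[symmetric])
  ultimately show ?thesis
    unfolding \<alpha>_def[symmetric] \<tau>_def[symmetric] abs_le_iff by linarith
qed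

lemma first_var_diff_bound:
  assumes u: "u \<in> rvecs (2*n)" and r: "r \<in> rvecs (2*n)" and r_unit: "rnorm (2*n) r = 1"
    and orth: "rdot (2*n) u (imul n r) = 0"
    and crit: "first_var n m a (\<lambda>i. intens n (a i) r) u (\<lambda>j. u j - r j) = 0"
  defines "\<eta> \<equiv> (rnorm (2*n) (\<lambda>j. u j - r j))\<^sup>2"
  shows "2 * \<eta> \<le> 4/1000 * \<eta> + 8004/1000 * \<eta>\<^sup>2"
proof -
  define h where "h = (\<lambda>j. u j - r j)"
  have h: "h \<in> rvecs (2*n)"
    using u r by (simp add: h_def rvecs_def)
  have "rdot (2*n) r (imul n h) = 0"
    using orth rdot_imul_antisym[of n r u] by (simp add: h_def imul_diff rdot_diff_right)
  then have "\<bar>moment_BB n m \<sigma> a r h - (2 * \<eta> + 6 * (rdot (2*n) r h)\<^sup>2)\<bar> \<le> 4/1000 * \<eta>"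
    using moment_BB_approx[OF T_near_S r h] r_unit by (simp add: \<eta>_def h_def)
  moreover have "\<bar>moment_QQ n m \<sigma> a h h - 8 * \<eta>\<^sup>2\<bar> \<le> 4/1000 * \<eta>\<^sup>2"
    using moment_QQ_approx[OF T_near_S h h]
    by (simp add: rdot_self_eq_rnorm_sq \<eta>_def h_def power2_eq_square mult.assoc)
  moreover have "moment_BB n m \<sigma> a r h - moment_QQ n m \<sigma> a h h \<le> 0"
    using moments_diff_le_first_var[of n m \<sigma> a r u] crit by (simp add: h_def)
  ultimately show ?thesis
    using zero_le_power2[of "rdot (2*n) r h"] unfolding abs_le_iff by linarith
qed

lemma critical_point_eq_unit_target:
  assumes u: "u \<in> rvecs (2*n)" and r: "r \<in> rvecs (2*n)" and r_unit: "rnorm (2*n) r = 1"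
    and crit: "\<And>w. w \<in> rvecs (2*n) \<Longrightarrow> first_var n m a (\<lambda>i. intens n (a i) r) u w = 0"
    and hess: "0 \<le> second_var n m a (\<lambda>i. intens n (a i) r) u r r"
    and orth: "rdot (2*n) u (imul n r) = 0" and pos: "0 \<le> rdot (2*n) u r"
  shows "u = r"
proof -
  have h: "(\<lambda>j. u j - r j) \<in> rvecs (2*n)"
    using u r by (simp add: rvecs_def)
  have "(rnorm (2*n) (\<lambda>j. u j - r j))\<^sup>2 = 0"
  proof (rule aligned_moment_bounds_imp_eq)
    have "rdot (2*n) r r = 1"
      using r_unit by (simp add: rdot_self_eq_rnorm_sq)
    then show "(rnorm (2*n) (\<lambda>j. u j - r j))\<^sup>2 = (rnorm (2*n) u)\<^sup>2 - 2 * rdot (2*n) u r + 1"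
      by (simp add: rdot_self_eq_rnorm_sq[symmetric] rdot_diff_self)
    show "(rdot (2*n) u r)\<^sup>2 \<le> (rnorm (2*n) u)\<^sup>2"
      using rdot_Cauchy_Schwarz[of "2*n" u r] r_unit by (simp add: rdot_self_eq_rnorm_sq)
  qed (use first_var_self_bound[OF u r r_unit orth crit[OF u]] first_var_target_bound[OF u r r_unit crit[OF r]]
      second_var_target_bound[OF u r r_unit orth hess] first_var_diff_bound[OF u r r_unit orth crit[OF h]]
      pos in \<open>simp_all add: rnorm_nonneg\<close>)
  then show ?thesis
    using rvecs_eq_if_rdot_diff_eq_0[OF u r] by (simp add: rdot_self_eq_rnorm_sq)
qed

lemma critical_point_eq_null_target:
  assumes u: "u \<in> rvecs (2*n)" and r: "r \<in> rvecs (2*n)" and r_null: "rnorm (2*n) r = 0"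
    and crit: "first_var n m a (\<lambda>i. intens n (a i) r) u u = 0"
  shows "u = r"
proof -
  have r_dots: "rdot (2*n) r r = 0" "rdot (2*n) u r = 0" "rdot (2*n) r (imul n u) = 0"
    using r_null rdot_Cauchy_Schwarz[of "2*n" u r] rdot_Cauchy_Schwarz[of "2*n" r "imul n u"]
    by (simp_all add: rdot_self_eq_rnorm_sq)
  then have "moment_QQ n m \<sigma> a r u = 0"
    using moment_QQ_approx[OF T_near_S r u] r_null by (simp add: rdot_commute[of _ r u])
  moreover have "moment_QQ n m \<sigma> a u u = moment_QQ n m \<sigma> a r u"
    using first_var_self_eq_moments[of n m a r u \<sigma>] crit by simp
  moreover have "\<bar>moment_QQ n m \<sigma> a u u - 8 * ((rnorm (2*n) u)\<^sup>2)\<^sup>2\<bar> \<le> 4/1000 * ((rnorm (2*n) u)\<^sup>2)\<^sup>2"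
    using moment_QQ_approx[OF T_near_S u u] by (simp add: rdot_self_eq_rnorm_sq power2_eq_square mult.assoc)
  ultimately have "rdot (2*n) u u = 0"
    by (simp add: rdot_self_eq_rnorm_sq)
  then show ?thesis
    using rvecs_eq_if_rdot_diff_eq_0[OF u r] r_dots by (simp add: rdot_diff_self)
qed

lemma critical_point_eq_target:
  assumes u: "u \<in> rvecs (2*n)" and r: "r \<in> rvecs (2*n)"
    and crit: "\<And>w. w \<in> rvecs (2*n) \<Longrightarrow> first_var n m a (\<lambda>i. intens n (a i) r) u w = 0"
    and hess: "0 \<le> second_var n m a (\<lambda>i. intens n (a i) r) u r r"
    and orth: "rdot (2*n) u (imul n r) = 0" and pos: "0 \<le> rdot (2*n) u r"
  shows "u = r"
proof (cases "rnorm (2*n) r = 0")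
  case True
  then show ?thesis
    using critical_point_eq_null_target[OF u r _ crit[OF u]] by blast
next
  case False
  define c where "c = 1 / rnorm (2*n) r"
  have c: "c \<noteq> 0"
    using False by (simp add: c_def)
  have "(\<lambda>j. c * u j) = (\<lambda>j. c * r j)"
  proof (rule critical_point_eq_unit_target)
    show "(\<lambda>j. c * u j) \<in> rvecs (2*n)" "(\<lambda>j. c * r j) \<in> rvecs (2*n)"
      using u r by (simp_all add: rvecs_def)
    show "rnorm (2*n) (\<lambda>j. c * r j) = 1"
      unfolding c_def rnorm_scale using False by (simp add: rnorm_nonneg)
    show "first_var n m a (\<lambda>i. intens n (a i) (\<lambda>j. c * r j)) (\<lambda>j. c * u j) w = 0"
      if "w \<in> rvecs (2*n)" for w
      using crit[OF that] by (simp add: first_var_scale)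
    show "0 \<le> second_var n m a (\<lambda>i. intens n (a i) (\<lambda>j. c * r j)) (\<lambda>j. c * u j)
        (\<lambda>j. c * r j) (\<lambda>j. c * r j)"
      using hess by (simp add: second_var_scale)
    show "rdot (2*n) (\<lambda>j. c * u j) (imul n (\<lambda>j. c * r j)) = 0"
      using orth by (simp add: imul_scale rdot_scale)
    show "0 \<le> rdot (2*n) (\<lambda>j. c * u j) (\<lambda>j. c * r j)"
      using pos by (simp add: rdot_scale)
  qed
  then show ?thesis
    using c by (simp add: fun_eq_iff)
qed

end

section \<open>Local minima and derivatives of the objective\<close>

lemma nonneg_at_0_if_nonneg_at_right:
  fixes g :: "real \<Rightarrow> real"
  assumes "isCont g 0" "0 < \<eta>" "\<And>t. 0 < t \<Longrightarrow> t < \<eta> \<Longrightarrow> 0 \<le> g t"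
  shows "0 \<le> g 0"
proof (rule tendsto_lowerbound)
  show "(g \<longlongrightarrow> g 0) (at_right 0)"
    using assms(1) by (simp add: isCont_def filterlim_at_split)
  show "\<forall>\<^sub>F t in at_right 0. 0 \<le> g t"
    using eventually_at_right_real[OF assms(2)] by eventually_elim (auto intro: assms(3))
qed simp

lemma quartic_nonneg_near_0:
  fixes c1 c2 c3 c4 \<eta> :: real
  assumes "0 < \<eta>" and nonneg: "\<And>t. \<bar>t\<bar> < \<eta> \<Longrightarrow> 0 \<le> t * c1 + t\<^sup>2 * c2 + t^3 * c3 + t^4 * c4"
  shows "c1 = 0" "0 \<le> c2"
proof -
  note limit_nonneg = nonneg_at_0_if_nonneg_at_right[OF _ assms(1)]
  have "0 \<le> s * c1 + s\<^sup>2 * c2 + s^3 * c3 + s^4 * c4" "0 \<le> - s * c1 + s\<^sup>2 * c2 - s^3 * c3 + s^4 * c4"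
    if "0 < s" "s < \<eta>" for s
    using nonneg[of s] nonneg[of "- s"] that by simp_all
  moreover have
    "s * c1 + s\<^sup>2 * c2 + s^3 * c3 + s^4 * c4 = s * (c1 + s * c2 + s\<^sup>2 * c3 + s^3 * c4)"
    "- s * c1 + s\<^sup>2 * c2 - s^3 * c3 + s^4 * c4 = s * (- c1 + s * c2 - s\<^sup>2 * c3 + s^3 * c4)"
    "s\<^sup>2 * c2 + s^3 * c3 + s^4 * c4 = s\<^sup>2 * (c2 + s * c3 + s\<^sup>2 * c4)" for s
    by (simp_all add: power2_eq_square power3_eq_cube power4_eq_xxxx algebra_simps)
  ultimately have quot: "0 \<le> c1 + s * c2 + s\<^sup>2 * c3 + s^3 * c4" "0 \<le> - c1 + s * c2 - s\<^sup>2 * c3 + s^3 * c4"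
    and quot2: "c1 = 0 \<Longrightarrow> 0 \<le> c2 + s * c3 + s\<^sup>2 * c4"
    if "0 < s" "s < \<eta>" for s
    using that by (simp_all add: zero_le_mult_iff)
  have cont: "isCont (\<lambda>s. c1 + s * c2 + s\<^sup>2 * c3 + s^3 * c4) 0"
    "isCont (\<lambda>s. - c1 + s * c2 - s\<^sup>2 * c3 + s^3 * c4) 0" "isCont (\<lambda>s. c2 + s * c3 + s\<^sup>2 * c4) 0"
    by (intro continuous_intros)+
  have "0 \<le> c1" "0 \<le> - c1"
    using limit_nonneg[OF cont(1)] limit_nonneg[OF cont(2)] quot by simp_all
  then show "c1 = 0"
    by simp
  then show "0 \<le> c2"
    using limit_nonneg[OF cont(3)] quot2 by simp
qed

lemma local_min_variations:
  fixes n m :: nat and a :: "nat \<Rightarrow> nat \<Rightarrow> complex" and xn :: "nat \<Rightarrow> complex"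
  defines "y \<equiv> \<lambda>i. (cmod (cinner n (a i) xn))\<^sup>2"
  assumes min: "is_local_min (2*n) (pr_obj n m a xn) u" and w: "w \<in> rvecs (2*n)"
  shows "first_var n m a y u w = 0" "0 \<le> second_var n m a y u w w"
proof -
  obtain \<epsilon> where u: "u \<in> rvecs (2*n)" and "0 < \<epsilon>" and loc:
    "\<And>v. v \<in> rvecs (2*n) \<Longrightarrow> rnorm (2*n) (\<lambda>j. v j - u j) < \<epsilon> \<Longrightarrow> pr_obj n m a xn u \<le> pr_obj n m a xn v"
    using min unfolding is_local_min_def by blast
  define \<eta> where "\<eta> = \<epsilon> / (rnorm (2*n) w + 1)"
  have "0 < \<eta>"
    using \<open>0 < \<epsilon>\<close> by (simp add: \<eta>_def add_nonneg_pos rnorm_nonneg)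
  have nonneg: "0 \<le> t * (4 * first_var n m a y u w) + t\<^sup>2 * (2 * second_var n m a y u w w)
      + t^3 * (4 * (\<Sum>i<m. intens_form n (a i) u w * intens n (a i) w))
      + t^4 * (\<Sum>i<m. (intens n (a i) w)\<^sup>2)" if "\<bar>t\<bar> < \<eta>" for t
  proof -
    have "rnorm (2*n) (\<lambda>j. (u j + t * w j) - u j) = \<bar>t\<bar> * rnorm (2*n) w"
      by (simp add: rnorm_scale)
    also have "\<dots> \<le> \<bar>t\<bar> * (rnorm (2*n) w + 1)"
      by (simp add: mult_left_mono)
    also have "\<dots> < \<eta> * (rnorm (2*n) w + 1)"
      using that by (simp add: add_nonneg_pos rnorm_nonneg)
    also have "\<dots> = \<epsilon>"
      using rnorm_nonneg[of "2*n" w] by (simp add: \<eta>_def)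
    finally have "pr_obj n m a xn u \<le> pr_obj n m a xn (\<lambda>j. u j + t * w j)"
      using u w by (intro loc) (simp_all add: rvecs_def)
    then show ?thesis
      unfolding pr_obj_eq residual_sum_line y_def by simp
  qed
  note quartic_nonneg_near_0[OF \<open>0 < \<eta>\<close> nonneg]
  then show "first_var n m a y u w = 0" "0 \<le> second_var n m a y u w w"
    by simp_all
qed

lemma add_basis_r: "(\<lambda>l. u l + (if l = j then t else 0)) = (\<lambda>l. u l + t * basis_r j l)"
  by (simp add: basis_r_def fun_eq_iff)

lemma pderiv_pr_obj:
  "pderiv_r (pr_obj n m a xn) j u =
     4 * first_var n m a (\<lambda>i. (cmod (cinner n (a i) xn))\<^sup>2) u (basis_r j)"
  unfolding pderiv_r_def add_basis_r pr_obj_eq residual_sum_line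
  by (rule DERIV_imp_deriv) (auto intro!: derivative_eq_intros)

lemma hess_pr_obj:
  "hess_r (pr_obj n m a xn) u j k =
     4 * second_var n m a (\<lambda>i. (cmod (cinner n (a i) xn))\<^sup>2) u (basis_r k) (basis_r j)"
  unfolding hess_r_def add_basis_r pderiv_pr_obj first_var_line
  by (rule DERIV_imp_deriv) (auto intro!: derivative_eq_intros)

lemma gradient_pr_obj:
  "(\<Sum>j<2*n. w j * pderiv_r (pr_obj n m a xn) j u) =
     4 * first_var n m a (\<lambda>i. (cmod (cinner n (a i) xn))\<^sup>2) u w"
  unfolding pderiv_pr_obj mult.left_commute[of "w _"] sum_distrib_left[symmetric]
  by (simp add: first_var_basis_expand)

lemma hessian_form_pr_obj:
  "(\<Sum>j<2*n. \<Sum>k<2*n. v j * hess_r (pr_obj n m a xn) u j k * v k) =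
     4 * second_var n m a (\<lambda>i. (cmod (cinner n (a i) xn))\<^sup>2) u v v"
proof -
  let ?sv = "second_var n m a (\<lambda>i. (cmod (cinner n (a i) xn))\<^sup>2) u"
  have "4 * ?sv v v = 4 * (\<Sum>j<2*n. v j * (\<Sum>k<2*n. v k * ?sv (basis_r k) (basis_r j)))"
    by (simp only: second_var_basis_expand second_var_basis_expand_left)
  also have "\<dots> = (\<Sum>j<2*n. \<Sum>k<2*n. v j * hess_r (pr_obj n m a xn) u j k * v k)"
    unfolding hess_pr_obj by (simp add: sum_distrib_left mult_ac)
  finally show ?thesis ..
qed

section \<open>Negative eigenvalues of symmetric forms\<close>

definition mat_form :: "nat \<Rightarrow> (nat \<Rightarrow> nat \<Rightarrow> real) \<Rightarrow> rvec \<Rightarrow> rvec \<Rightarrow> real" where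
  "mat_form N H x w = (\<Sum>j<N. \<Sum>k<N. x j * H j k * w k)"

lemma mat_form_line:
  "mat_form N H (\<lambda>l. x l + t * w l) (\<lambda>l. x l + t * w l) =
     mat_form N H x x + t * (mat_form N H x w + mat_form N H w x) + t\<^sup>2 * mat_form N H w w"
proof -
  have "(x j + t * w j) * H j k * (x k + t * w k) =
      x j * H j k * x k + t * (x j * H j k * w k + w j * H j k * x k) + t\<^sup>2 * (w j * H j k * w k)"
    for j k
    by (simp add: power2_eq_square algebra_simps)
  then show ?thesis
    by (simp add: mat_form_def sum.distrib sum_distrib_left distrib_left)
qed

lemma mat_form_scale: "mat_form N H (\<lambda>l. c * x l) (\<lambda>l. c * x l) = c\<^sup>2 * mat_form N H x x"
  by (simp add: mat_form_def sum_distrib_left power2_eq_square ac_simps)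

lemma mat_form_basis_r:
  assumes "j < N"
  shows "mat_form N H (basis_r j) x = (\<Sum>k<N. H j k * x k)"
    and "mat_form N H x (basis_r j) = (\<Sum>k<N. x k * H k j)"
proof -
  have "mat_form N H (basis_r j) x = rdot N (\<lambda>l. \<Sum>k<N. H l k * x k) (basis_r j)"
    by (simp add: mat_form_def rdot_def sum_distrib_left ac_simps)
  then show "mat_form N H (basis_r j) x = (\<Sum>k<N. H j k * x k)"
    using assms by (simp add: rdot_basis_r)
  have "mat_form N H x (basis_r j) = (\<Sum>l<N. x l * rdot N (H l) (basis_r j))"
    by (simp add: mat_form_def rdot_def sum_distrib_left ac_simps)
  then show "mat_form N H x (basis_r j) = (\<Sum>k<N. x k * H k j)"
    using assms by (simp add: rdot_basis_r)
qed

lemma compact_rvecs_sphere: "compact {x \<in> rvecs N. rdot N x x = 1}"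
proof -
  let ?K = "PiE UNIV (\<lambda>j. if j < N then {-1..1::real} else {0})"
  have "compactin (product_topology (\<lambda>_. euclidean) UNIV) ?K"
    by (simp add: compactin_PiE)
  then have "compact ?K"
    by (simp add: euclidean_product_topology)
  moreover have "closed {x :: nat \<Rightarrow> real. rdot N x x = 1}"
    unfolding rdot_def
    by (rule closed_Collect_eq) (intro continuous_intros continuous_on_product_coordinates)+
  moreover have "{x \<in> rvecs N. rdot N x x = 1} = ?K \<inter> {x. rdot N x x = 1}"
  proof (intro set_eqI iffI)
    fix x
    assume x: "x \<in> {x \<in> rvecs N. rdot N x x = 1}"
    then have "\<bar>x j\<bar> \<le> 1" if "j < N" for j
      using abs_le_rnorm[OF that, of x] by (simp add: rnorm_eq_sqrt_rdot)
    with x show "x \<in> ?K \<inter> {x. rdot N x x = 1}"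
      by (simp add: rvecs_def PiE_iff abs_le_iff)
  next
    fix x
    assume x: "x \<in> ?K \<inter> {x. rdot N x x = 1}"
    have "x j = 0" if "N \<le> j" for j
      using x that by (simp add: PiE_iff) (metis not_le singletonD)
    with x show "x \<in> {x \<in> rvecs N. rdot N x x = 1}"
      by (simp add: rvecs_def)
  qed
  ultimately show ?thesis
    by (simp add: compact_Int_closed)
qed

lemma rayleigh_minimizer_exists:
  fixes H :: "nat \<Rightarrow> nat \<Rightarrow> real"
  assumes "0 < N"
  obtains x where "x \<in> rvecs N" "rdot N x x = 1"
    "\<And>y. y \<in> rvecs N \<Longrightarrow> mat_form N H x x * rdot N y y \<le> mat_form N H y y"
proof -
  let ?S = "{x \<in> rvecs N. rdot N x x = 1}"
  have "basis_r 0 \<in> ?S"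
    using assms rdot_basis_r[OF assms, of "basis_r 0"] by (simp add: rvecs_def basis_r_def)
  moreover have "continuous_on UNIV (\<lambda>x. mat_form N H x x)"
    unfolding mat_form_def by (intro continuous_intros continuous_on_product_coordinates)
  then have "continuous_on ?S (\<lambda>x. mat_form N H x x)"
    by (rule continuous_on_subset) simp
  ultimately obtain x where x: "x \<in> ?S" and x_min: "\<And>y. y \<in> ?S \<Longrightarrow> mat_form N H x x \<le> mat_form N H y y"
    using continuous_attains_inf[OF compact_rvecs_sphere] by blast
  have "mat_form N H x x * rdot N y y \<le> mat_form N H y y" if y: "y \<in> rvecs N" for y
  proof (cases "rdot N y y = 0")
    case True
    then show ?thesis
      using rvecs_eq_if_rdot_diff_eq_0[OF y, of "\<lambda>_. 0"] by (simp add: rvecs_def mat_form_def)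
  next
    case False
    then have pos: "0 < rdot N y y"
      using rdot_self_nonneg[of N y] by simp
    let ?z = "\<lambda>l. (1 / sqrt (rdot N y y)) * y l"
    have "rdot N ?z ?z = 1"
      unfolding rdot_scale using pos by (simp add: power_divide)
    then have "mat_form N H x x \<le> mat_form N H ?z ?z"
      using y by (intro x_min) (simp add: rvecs_def)
    also have "\<dots> = mat_form N H y y / rdot N y y"
      unfolding mat_form_scale using pos by (simp add: power_divide)
    finally show ?thesis
      using pos by (simp add: pos_le_divide_eq)
  qed
  with x that show ?thesis
    by blast
qed

lemma rayleigh_minimizer_eigenvector:
  fixes H :: "nat \<Rightarrow> nat \<Rightarrow> real"
  assumes sym: "\<And>j k. j < N \<Longrightarrow> k < N \<Longrightarrow> H j k = H k j"
    and x: "x \<in> rvecs N" "rdot N x x = 1"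
    and min: "\<And>y. y \<in> rvecs N \<Longrightarrow> mat_form N H x x * rdot N y y \<le> mat_form N H y y"
    and j: "j < N"
  shows "(\<Sum>k<N. H j k * x k) = mat_form N H x x * x j"
proof -
  let ?\<mu> = "mat_form N H x x"
  let ?c1 = "2 * ((\<Sum>k<N. H j k * x k) - ?\<mu> * x j)" and ?c2 = "H j j - ?\<mu>"
  have "0 \<le> t * ?c1 + t\<^sup>2 * ?c2 + t^3 * 0 + t^4 * 0" if "\<bar>t\<bar> < 1" for t
  proof -
    have "(\<lambda>l. x l + t * basis_r j l) \<in> rvecs N"
      using x j by (simp add: rvecs_def basis_r_def)
    note min[OF this]
    moreover have "mat_form N H x (basis_r j) = (\<Sum>k<N. H j k * x k)"
      using j sym by (simp add: mat_form_basis_r mult.commute)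
    moreover have "mat_form N H (basis_r j) (basis_r j) = H j j"
      using rdot_basis_r[OF j, of "H j"] by (simp add: mat_form_basis_r(1)[OF j] rdot_def)
    moreover have "rdot N x (basis_r j) = x j" "rdot N (basis_r j) (basis_r j) = 1"
      using rdot_basis_r[OF j, of x] rdot_basis_r[OF j, of "basis_r j"] by (simp_all add: basis_r_def)
    ultimately show ?thesis
      using x j by (simp add: mat_form_line rdot_line mat_form_basis_r power2_eq_square algebra_simps)
  qed
  then have "?c1 = 0"
    using quartic_nonneg_near_0(1)[of 1 ?c1 ?c2 0 0] by simp
  then show ?thesis
    by simp
qed

lemma symmetric_neg_form_imp_neg_eigenvalue:
  fixes H :: "nat \<Rightarrow> nat \<Rightarrow> real"
  assumes sym: "\<And>j k. j < N \<Longrightarrow> k < N \<Longrightarrow> H j k = H k j"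
    and v: "v \<in> rvecs N" and neg: "mat_form N H v v < 0"
  shows "\<exists>\<mu><0. \<exists>w\<in>rvecs N. w \<noteq> (\<lambda>_. 0) \<and> (\<forall>j<N. (\<Sum>k<N. H j k * w k) = \<mu> * w j)"
proof -
  have "rdot N v v \<noteq> 0"
    using neg rvecs_eq_if_rdot_diff_eq_0[OF v, of "\<lambda>_. 0"] by (auto simp: rvecs_def mat_form_def)
  then have v_pos: "0 < rdot N v v" and "0 < N"
    using rdot_self_nonneg[of N v] by (simp, metis lessThan_0 sum.empty rdot_def neq0_conv)
  then obtain x where x: "x \<in> rvecs N" "rdot N x x = 1"
    and min: "\<And>y. y \<in> rvecs N \<Longrightarrow> mat_form N H x x * rdot N y y \<le> mat_form N H y y"
    using rayleigh_minimizer_exists by blast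
  have "mat_form N H x x * rdot N v v < 0"
    using min[OF v] neg by linarith
  then have "mat_form N H x x < 0"
    using v_pos by (simp add: mult_less_0_iff)
  moreover have "x \<noteq> (\<lambda>_. 0)"
    using x by (auto simp: rdot_def)
  ultimately show ?thesis
    using rayleigh_minimizer_eigenvector[OF sym x min] x by blast
qed

section \<open>The landscape of the objective\<close>

lemma pr_obj_phase_zero:
  "cmod w = 1 \<Longrightarrow> pr_obj n m a xn (plus_vec n (\<lambda>j. xn j * w)) = 0"
  by (simp add: pr_obj_eq intens_plus_vec cmod_cinner_mult_phase)

lemma pr_obj_nonneg: "0 \<le> pr_obj n m a xn u"
  by (simp add: pr_obj_def sum_nonneg)

lemma phase_is_global_min:
  assumes "cmod w = 1"
  shows "is_global_min (2*n) (pr_obj n m a xn) (plus_vec n (\<lambda>j. xn j * w))"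
    and "is_local_min (2*n) (pr_obj n m a xn) (plus_vec n (\<lambda>j. xn j * w))"
proof -
  have "plus_vec n (\<lambda>j. xn j * w) \<in> rvecs (2*n)"
    by (simp add: plus_vec_def rvecs_def)
  then show "is_global_min (2*n) (pr_obj n m a xn) (plus_vec n (\<lambda>j. xn j * w))"
    using pr_obj_phase_zero[OF assms] pr_obj_nonneg by (simp add: is_global_min_def)
  then show "is_local_min (2*n) (pr_obj n m a xn) (plus_vec n (\<lambda>j. xn j * w))"
    by (auto simp: is_global_min_def is_local_min_def intro: exI[of _ 1])
qed

context
  fixes n m :: nat and \<sigma> :: real and a :: "nat \<Rightarrow> nat \<Rightarrow> complex" and xn :: "nat \<Rightarrow> complex"
  assumes T_near_S:
    "tensor_opnorm (2*n) (\<lambda>i1 i2 i3 i4. T_tensor n m \<sigma> a i1 i2 i3 i4 - S_tensor i1 i2 i3 i4) \<le> 1/1000"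
begin

lemma critical_point_phase:
  assumes u: "u \<in> rvecs (2*n)"
    and crit: "\<And>w. w \<in> rvecs (2*n) \<Longrightarrow> first_var n m a (\<lambda>i. (cmod (cinner n (a i) xn))\<^sup>2) u w = 0"
  obtains w where "cmod w = 1"
    "0 \<le> second_var n m a (\<lambda>i. (cmod (cinner n (a i) xn))\<^sup>2) u
        (plus_vec n (\<lambda>j. xn j * w)) (plus_vec n (\<lambda>j. xn j * w))
     \<Longrightarrow> u = plus_vec n (\<lambda>j. xn j * w)"
proof -
  obtain w where w: "cmod w = 1" "rdot (2*n) u (imul n (plus_vec n (\<lambda>j. xn j * w))) = 0"
    "0 \<le> rdot (2*n) u (plus_vec n (\<lambda>j. xn j * w))"
    using exists_phase_aligned by blast
  let ?r = "plus_vec n (\<lambda>j. xn j * w)"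
  have y: "(\<lambda>i. (cmod (cinner n (a i) xn))\<^sup>2) = (\<lambda>i. intens n (a i) ?r)"
    using w(1) by (simp add: intens_plus_vec cmod_cinner_mult_phase)
  have "u = ?r" if "0 \<le> second_var n m a (\<lambda>i. (cmod (cinner n (a i) xn))\<^sup>2) u ?r ?r"
    using critical_point_eq_target[OF T_near_S u _ crit[unfolded y] that[unfolded y] w(2,3)]
    by (simp add: plus_vec_def rvecs_def)
  with w(1) show ?thesis
    using that by blast
qed

lemma local_min_is_phase:
  assumes min: "is_local_min (2*n) (pr_obj n m a xn) u"
  shows "(\<exists>\<theta>. 0 \<le> \<theta> \<and> \<theta> < 2*pi \<and> u = plus_vec n (\<lambda>j. xn j * exp (\<i> * complex_of_real \<theta>)))
    \<and> is_global_min (2*n) (pr_obj n m a xn) u"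
proof -
  have u: "u \<in> rvecs (2*n)"
    using min by (simp add: is_local_min_def)
  obtain w where w: "cmod w = 1"
    "0 \<le> second_var n m a (\<lambda>i. (cmod (cinner n (a i) xn))\<^sup>2) u
        (plus_vec n (\<lambda>j. xn j * w)) (plus_vec n (\<lambda>j. xn j * w))
     \<Longrightarrow> u = plus_vec n (\<lambda>j. xn j * w)"
    using critical_point_phase[OF u local_min_variations(1)[OF min]] by blast
  then have u_eq: "u = plus_vec n (\<lambda>j. xn j * w)"
    using local_min_variations(2)[OF min, of "plus_vec n (\<lambda>j. xn j * w)"]
    by (auto simp: plus_vec_def rvecs_def)
  have "w = exp (\<i> * complex_of_real (Arg2pi w))"
    using Arg2pi_eq[of w] w(1) by simp
  then show ?thesis
    using u_eq Arg2pi_ge_0[of w] Arg2pi_lt_2pi[of w] phase_is_global_min(1)[OF w(1)] by metis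
qed

lemma saddle_has_neg_eigenvalue:
  assumes crit: "is_critical (2*n) (pr_obj n m a xn) u"
    and not_min: "\<not> is_local_min (2*n) (pr_obj n m a xn) u"
  shows "hess_has_neg_eigenvalue (2*n) (pr_obj n m a xn) u"
proof -
  let ?y = "\<lambda>i. (cmod (cinner n (a i) xn))\<^sup>2"
  have u: "u \<in> rvecs (2*n)"
    using crit by (simp add: is_critical_def)
  have "4 * first_var n m a ?y u w = 0" for w
    using crit by (simp add: is_critical_def flip: gradient_pr_obj)
  then obtain w where "cmod w = 1"
    and eq: "0 \<le> second_var n m a ?y u (plus_vec n (\<lambda>j. xn j * w)) (plus_vec n (\<lambda>j. xn j * w))
       \<Longrightarrow> u = plus_vec n (\<lambda>j. xn j * w)"
    using critical_point_phase[OF u] by auto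
  let ?r = "plus_vec n (\<lambda>j. xn j * w)"
  have "second_var n m a ?y u ?r ?r < 0"
    using eq not_min phase_is_global_min(2)[OF \<open>cmod w = 1\<close>] by force
  then have "mat_form (2*n) (hess_r (pr_obj n m a xn) u) ?r ?r < 0"
    by (simp add: mat_form_def hessian_form_pr_obj)
  moreover have "hess_r (pr_obj n m a xn) u j k = hess_r (pr_obj n m a xn) u k j" for j k
    by (simp add: hess_pr_obj second_var_commute)
  ultimately show ?thesis
    unfolding hess_has_neg_eigenvalue_def
    by (intro symmetric_neg_form_imp_neg_eigenvalue) (simp_all add: plus_vec_def rvecs_def)
qed

end

theorem theorem1:
  shows "\<exists>\<delta>0>0. \<forall>(n::nat) (m::nat) (a::nat \<Rightarrow> nat \<Rightarrow> complex) (xn::nat \<Rightarrow> complex) (\<sigma>::real).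
     n \<ge> 1 \<longrightarrow> m \<ge> 1 \<longrightarrow> \<sigma> > 0 \<longrightarrow>
     tensor_opnorm (2*n) (\<lambda>i1 i2 i3 i4. T_tensor n m \<sigma> a i1 i2 i3 i4 - S_tensor i1 i2 i3 i4) \<le> \<delta>0 \<longrightarrow>
     (\<forall>u. is_local_min (2*n) (pr_obj n m a xn) u \<longrightarrow>
          (\<exists>\<theta>. 0 \<le> \<theta> \<and> \<theta> < 2*pi \<and> u = plus_vec n (\<lambda>j. xn j * exp (\<i> * complex_of_real \<theta>)))
          \<and> is_global_min (2*n) (pr_obj n m a xn) u)
   \<and> (\<forall>u. is_critical (2*n) (pr_obj n m a xn) u \<and> \<not> is_local_min (2*n) (pr_obj n m a xn) u \<longrightarrow>
          hess_has_neg_eigenvalue (2*n) (pr_obj n m a xn) u)"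
proof -
  have "(\<forall>u. is_local_min (2*n) (pr_obj n m a xn) u \<longrightarrow>
          (\<exists>\<theta>. 0 \<le> \<theta> \<and> \<theta> < 2*pi \<and> u = plus_vec n (\<lambda>j. xn j * exp (\<i> * complex_of_real \<theta>)))
          \<and> is_global_min (2*n) (pr_obj n m a xn) u)
      \<and> (\<forall>u. is_critical (2*n) (pr_obj n m a xn) u \<and> \<not> is_local_min (2*n) (pr_obj n m a xn) u \<longrightarrow>
          hess_has_neg_eigenvalue (2*n) (pr_obj n m a xn) u)"
    if "tensor_opnorm (2*n) (\<lambda>i1 i2 i3 i4. T_tensor n m \<sigma> a i1 i2 i3 i4 - S_tensor i1 i2 i3 i4) \<le> 1/1000"
    for n m a xn \<sigma>
    using local_min_is_phase[OF that] saddle_has_neg_eigenvalue[OF that] by blast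
  then show ?thesis
    by (intro exI[of _ "1/1000"]) simp
qed
end
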